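(* Let $K=K_*\ge 2$ be the true (known) number of communities, $Z_*\in\mathcal M_{n,K}$ the true clustering matrix, and suppose Assumption A1 holds. Let $\hat Z$ be a solution (for this fixed $K$) of $$\min_{Z\in\mathcal M_{n,K},\,J}\Big\{\sum_{k,l=1}^K\big\|A^{(k,l)}(Z,K)-\Pi_{(1)}\big(\Pi_{J^{(k,l)}}(A^{(k,l)}(Z,K))\big)\big\|_F^2+\mathrm{Pen}(n,J,K)\Big\},$$ where $J$ ranges over sparsity families for $(Z,K)$ and $\mathrm{Pen}$ is one of the penalties $\mathrm{Pen}^{(s)}$, $\mathrm{Pen}^{(ns)}$ (with fixed constants $\beta_1,\beta_2>0$). There are absolute positive constants $H_1,H_2$, independent of $K,n,t,J_*,\breve J_*(Z),\delta_n,\alpha_n$, such that: if for some $\alpha_n\in(0,1/2)$, $\delta_n\in(0,1)$ and $t>0$, $$\|P_*\|_F^2\ge\max_{Z\in\Upsilon(Z_*,\delta_n)}\Big[(1+\alpha_n)\sum_{k,l=1}^K\|P_*^{(k,l)}(Z)\|_{op}^2+\frac{H_1}{\alpha_n}|\breve J_*(Z)|\ln\Big(\frac{nKe}{|\breve J_*(Z)|}\Big)\Big]+\frac{H_1}{\alpha_n}\big(|J_*|+n\ln K+t\big)+H_2|J_*|\ln\Big(\frac{nKe}{|J_*|}\Big),$$ then, with probability at least $1-2e^{-t}$, the proportion of nodes misclassified by $\hat Z$, namely $(2n)^{-1}\min_{\mathscr P_K\in\mathcal P_K}\|\hat Z\mathscr P_K-Z_*\|_1$, is at most $\delta_n$.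
   Context: Network model: $A\in\{0,1\}^{n\times n}$ symmetric, $A_{ij}\sim\mathrm{Bernoulli}((P_* )_{ij})$ independent for $1\le i\le j\le n$, $A_{ji}=A_{ij}$, $P_*$ symmetric. $\mathcal M_{n,K}$: matrices $Z\in\{0,1\}^{n\times K}$ with one $1$ per row, $Z_{ik}=1$ iff node $i\in\mathcal N_k$, $Z^TZ=\mathrm{diag}(n_1,\dots,n_K)$, $n_k=|\mathcal N_k|$. $\mathscr P_{Z,K}$ is the permutation matrix reordering nodes by community; $B(Z,K)=\mathscr P_{Z,K}^TB\mathscr P_{Z,K}$ and $B^{(k,l)}(Z)=B^{(k,l)}(Z,K)\in\mathbb R^{n_k\times n_l}$ is its $(k,l)$ block (rows: nodes of $\mathcal N_k$, columns: nodes of $\mathcal N_l$). True model: $P_*^{(k,l)}(Z_* )=\Lambda_*^{(k,l)}(\Lambda_*^{(l,k)})^T$ where $\Lambda_*\in[0,1]^{n\times K}$ has column $l$ split into blocks $\Lambda_*^{(k,l)}\in[0,1]^{n_k}$ indexed by the nodes of community $k$ of $Z_*$. Assumption A1: for every $k$, the vectors $\Lambda_*^{(k,1)},\dots,\Lambda_*^{(k,K)}$ are linearly independent. $(J_* )_{k,l}=\{i:(\Lambda_*^{(k,l)})_i\ne0\}$, $|J_*|=\sum_{k,l}|(J_* )_{k,l}|$ (number of nonzero entries of $\Lambda_*$). For $Z\in\mathcal M_{n,K}$: $(\breve J_* )_{k,l}(Z)=\{i\in\mathcal N_k: (P_*^{(k,l)}(Z))_{ij}\neq0 \text{ for some } j\}$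 and $|\breve J_*(Z)|=\sum_{k,l}|(\breve J_* )_{k,l}(Z)|$. A sparsity family for $(Z,K)$ is $J=(J_{k,l})$ with $J_{k,l}\subseteq\mathcal N_k$, $J^{(k,l)}=J_{k,l}\times J_{l,k}$, $|J|=\sum|J_{k,l}|$; $\Pi_{J^{(k,l)}}(X)$ sets entries of $X$ outside $J^{(k,l)}$ to zero; $\Pi_{(1)}(X)$ is the best rank-one approximation of $X$. Penalties (convention $0\ln(c/0)=0$): $\mathrm{Pen}^{(s)}=\beta_1\sum_{k,l}|J_{k,l}|\ln(n_ke/|J_{k,l}|)+\beta_2K\sum_k\ln n_k+\beta_2(n\ln K+\ln n)$; $\mathrm{Pen}^{(ns)}=\beta_1|J|\ln(nKe/|J|)+2\beta_2\ln n+\beta_2(n\ln K+\ln n)$. $\mathcal P_K$ is the set of $K\times K$ permutation matrices, and $\Upsilon(Z_*,\delta_n)=\{Z\in\mathcal M_{n,K}:(2n)^{-1}\min_{\mathscr P_K\in\mathcal P_K}\|Z\mathscr P_K-Z_*\|_1\ge\delta_n\}$; $\|\cdot\|_1$ is the entrywise $\ell_1$ norm. *)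

theory Defs
  imports "HOL-Probability.Probability" "HOL-Combinatorics.Permutations"
begin

text \<open>Nodes are 0..n-1, communities 0..K-1. A clustering matrix Z in M_{n,K} is encoded
 by its label function z (z i = k iff Z_{ik} = 1).\<close>

definition comm :: "nat \<Rightarrow> (nat \<Rightarrow> nat) \<Rightarrow> nat \<Rightarrow> nat set" where
  "comm n z k = {i \<in> {..<n}. z i = k}"

definition labelings :: "nat \<Rightarrow> nat \<Rightarrow> (nat \<Rightarrow> nat) set" where
  "labelings n K = {z \<in> {..<n} \<rightarrow>\<^sub>E {..<K}. \<forall>k<K. comm n z k \<noteq> {}}"

definition zmat :: "(nat \<Rightarrow> nat) \<Rightarrow> nat \<Rightarrow> nat \<Rightarrow> real" where
  "zmat z i k = (if z i = k then 1 else 0)"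

definition permmat :: "(nat \<Rightarrow> nat) \<Rightarrow> nat \<Rightarrow> nat \<Rightarrow> real" where
  "permmat \<sigma> k l = (if \<sigma> k = l then 1 else 0)"

definition misclass :: "nat \<Rightarrow> nat \<Rightarrow> (nat \<Rightarrow> nat) \<Rightarrow> (nat \<Rightarrow> nat) \<Rightarrow> real" where
  "misclass n K z zs =
     Min ((\<lambda>\<sigma>. \<Sum>i<n. \<Sum>l<K. \<bar>(\<Sum>k<K. zmat z i k * permmat \<sigma> k l) - zmat zs i l\<bar>)
           ` {\<sigma>. \<sigma> permutes {..<K}}) / (2 * real n)"

definition is_sparsity_family :: "nat \<Rightarrow> nat \<Rightarrow> (nat \<Rightarrow> nat) \<Rightarrow> (nat \<Rightarrow> nat \<Rightarrow> nat set) \<Rightarrow> bool" where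
  "is_sparsity_family n K z J \<longleftrightarrow> (\<forall>k<K. \<forall>l<K. J k l \<subseteq> comm n z k)"

definition card_fam :: "nat \<Rightarrow> (nat \<Rightarrow> nat \<Rightarrow> nat set) \<Rightarrow> nat" where
  "card_fam K J = (\<Sum>k<K. \<Sum>l<K. card (J k l))"

definition frob2 :: "nat set \<Rightarrow> nat set \<Rightarrow> (nat \<Rightarrow> nat \<Rightarrow> real) \<Rightarrow> real" where
  "frob2 I J M = (\<Sum>i\<in>I. \<Sum>j\<in>J. (M i j)\<^sup>2)"

definition opnorm :: "nat set \<Rightarrow> nat set \<Rightarrow> (nat \<Rightarrow> nat \<Rightarrow> real) \<Rightarrow> real" where
  "opnorm I J M = Sup {sqrt (\<Sum>i\<in>I. (\<Sum>j\<in>J. M i j * v j)\<^sup>2) | v. (\<Sum>j\<in>J. (v j)\<^sup>2) \<le> 1}"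

definition rank_le1 :: "(nat \<Rightarrow> nat \<Rightarrow> real) set" where
  "rank_le1 = {R. \<exists>u v. \<forall>i j. R i j = u i * v j}"

definition best_rank1 :: "nat set \<Rightarrow> nat set \<Rightarrow> (nat \<Rightarrow> nat \<Rightarrow> real) \<Rightarrow> (nat \<Rightarrow> nat \<Rightarrow> real)" where
  "best_rank1 I J Y = (SOME R. R \<in> rank_le1 \<and>
     (\<forall>R' \<in> rank_le1. frob2 I J (\<lambda>i j. Y i j - R i j) \<le> frob2 I J (\<lambda>i j. Y i j - R' i j)))"

definition sparse_proj :: "(nat \<Rightarrow> nat \<Rightarrow> nat set) \<Rightarrow> nat \<Rightarrow> nat \<Rightarrow> (nat \<Rightarrow> nat \<Rightarrow> real) \<Rightarrow> (nat \<Rightarrow> nat \<Rightarrow> real)" where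
  "sparse_proj J k l A = (\<lambda>i j. if i \<in> J k l \<and> j \<in> J l k then A i j else 0)"

definition pen_s :: "real \<Rightarrow> real \<Rightarrow> nat \<Rightarrow> nat \<Rightarrow> (nat \<Rightarrow> nat) \<Rightarrow> (nat \<Rightarrow> nat \<Rightarrow> nat set) \<Rightarrow> real" where
  "pen_s \<beta>1 \<beta>2 n K z J =
     \<beta>1 * (\<Sum>k<K. \<Sum>l<K. real (card (J k l)) *
             ln (real (card (comm n z k)) * exp 1 / real (card (J k l))))
     + \<beta>2 * real K * (\<Sum>k<K. ln (real (card (comm n z k))))
     + \<beta>2 * (real n * ln (real K) + ln (real n))"

definition pen_ns :: "real \<Rightarrow> real \<Rightarrow> nat \<Rightarrow> nat \<Rightarrow> (nat \<Rightarrow> nat \<Rightarrow> nat set) \<Rightarrow> real" where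
  "pen_ns \<beta>1 \<beta>2 n K J =
     \<beta>1 * real (card_fam K J) * ln (real n * real K * exp 1 / real (card_fam K J))
     + 2 * \<beta>2 * ln (real n)
     + \<beta>2 * (real n * ln (real K) + ln (real n))"

definition crit :: "real \<Rightarrow> real \<Rightarrow> bool \<Rightarrow> nat \<Rightarrow> nat \<Rightarrow> (nat \<Rightarrow> nat \<Rightarrow> real)
                    \<Rightarrow> (nat \<Rightarrow> nat) \<Rightarrow> (nat \<Rightarrow> nat \<Rightarrow> nat set) \<Rightarrow> real" where
  "crit \<beta>1 \<beta>2 sp n K A z J =
     (\<Sum>k<K. \<Sum>l<K. frob2 (comm n z k) (comm n z l)
        (\<lambda>i j. A i j - best_rank1 (comm n z k) (comm n z l) (sparse_proj J k l A) i j))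
     + (if sp then pen_s \<beta>1 \<beta>2 n K z J else pen_ns \<beta>1 \<beta>2 n K J)"

definition is_estimate :: "real \<Rightarrow> real \<Rightarrow> bool \<Rightarrow> nat \<Rightarrow> nat \<Rightarrow> (nat \<Rightarrow> nat \<Rightarrow> real) \<Rightarrow> (nat \<Rightarrow> nat) \<Rightarrow> bool" where
  "is_estimate \<beta>1 \<beta>2 sp n K A z \<longleftrightarrow> z \<in> labelings n K \<and>
     (\<exists>J. is_sparsity_family n K z J \<and>
        (\<forall>z' \<in> labelings n K. \<forall>J'. is_sparsity_family n K z' J' \<longrightarrow>
            crit \<beta>1 \<beta>2 sp n K A z J \<le> crit \<beta>1 \<beta>2 sp n K A z' J'))"

definition breve_card :: "nat \<Rightarrow> nat \<Rightarrow> (nat \<Rightarrow> nat \<Rightarrow> real) \<Rightarrow> (nat \<Rightarrow> nat) \<Rightarrow> nat" where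
  "breve_card n K P z = (\<Sum>k<K. \<Sum>l<K. card {i \<in> comm n z k. \<exists>j \<in> comm n z l. P i j \<noteq> 0})"

definition Jstar_card :: "nat \<Rightarrow> nat \<Rightarrow> (nat \<Rightarrow> nat) \<Rightarrow> (nat \<Rightarrow> nat \<Rightarrow> real) \<Rightarrow> nat" where
  "Jstar_card n K zs \<Lambda> = (\<Sum>k<K. \<Sum>l<K. card {i \<in> comm n zs k. \<Lambda> i l \<noteq> 0})"

definition edge_pmf :: "nat \<Rightarrow> (nat \<Rightarrow> nat \<Rightarrow> real) \<Rightarrow> (nat \<times> nat \<Rightarrow> bool) pmf" where
  "edge_pmf n P = Pi_pmf {(i, j). i \<le> j \<and> j < n} False (\<lambda>(i, j). bernoulli_pmf (P i j))"

definition adj :: "nat \<Rightarrow> (nat \<times> nat \<Rightarrow> bool) \<Rightarrow> nat \<Rightarrow> nat \<Rightarrow> real" where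
  "adj n \<omega> = (\<lambda>i j. if i < n \<and> j < n \<and> \<omega> (min i j, max i j) then 1 else 0)"

end

(*
  Compare the penalised criterion at the estimate z with its value at the truth
  (Z_star, J_star).  For every clustering the best rank-one fit of a block leaves a residual of
  at least |A^(k,l)|_F^2 - |A^(k,l)|_op^2, whereas at the truth the rank-one blocks
  P^(k,l) are admissible and the sparse projection does not change A.  Hence
  |P|_F^2 + 2 <P, A - P> <= sum_(k,l) |A^(k,l)(z)|_op^2 + O(|J_star| ln(nKe/|J_star|) + n ln K).
  Writing A = P + E, the inner product <P, E> is bounded below by Hoeffding's inequality,
  and the block operator norms of the noise E are bounded simultaneously for all
  labellings by Hoeffding's inequality on finite nets of the unit balls supported on
  the nonzero rows of P (about 2^(30 |breve J_star(z)|) points), combined with a union bound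
  over the K^n labellings.  Outside an event of probability 2 e^(-t) these bounds
  contradict the separation condition for any z misclassifying more than a fraction
  delta of the nodes.
*)
theory Submission
  imports Defs
begin

definition sq_norm :: "'a set \<Rightarrow> ('a \<Rightarrow> real) \<Rightarrow> real" where
  "sq_norm S u = (\<Sum>i\<in>S. (u i)\<^sup>2)"

definition mat_vec :: "nat set \<Rightarrow> (nat \<Rightarrow> nat \<Rightarrow> real) \<Rightarrow> (nat \<Rightarrow> real) \<Rightarrow> nat \<Rightarrow> real" where
  "mat_vec J M v = (\<lambda>i. \<Sum>j\<in>J. M i j * v j)"

lemma sq_norm_nonneg [simp]: "0 \<le> sq_norm S u"
  unfolding sq_norm_def by (auto intro: sum_nonneg)

lemma sq_norm_scale: "sq_norm S (\<lambda>i. c * u i) = c\<^sup>2 * sq_norm S u"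
  unfolding sq_norm_def by (simp add: sum_distrib_left power_mult_distrib)

lemma sq_norm_eq_0_iff: "finite S \<Longrightarrow> sq_norm S u = 0 \<longleftrightarrow> (\<forall>i\<in>S. u i = 0)"
  unfolding sq_norm_def by (simp add: sum_nonneg_eq_0_iff)

lemma sq_norm_cong_support:
  assumes "A \<subseteq> B" "finite B" "\<And>i. i \<in> B \<Longrightarrow> i \<notin> A \<Longrightarrow> f i = 0"
  shows "sq_norm B f = sq_norm A f"
  unfolding sq_norm_def using assms by (intro sum.mono_neutral_right) auto

lemma sq_norm_mono_set: "A \<subseteq> B \<Longrightarrow> finite B \<Longrightarrow> sq_norm A f \<le> sq_norm B f"
  unfolding sq_norm_def by (intro sum_mono2) auto

lemma sq_norm_le_1_imp_abs_le_1:
  assumes "finite S" "sq_norm S u \<le> 1" "i \<in> S"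
  shows "\<bar>u i\<bar> \<le> 1"
proof -
  have "(u i)\<^sup>2 \<le> 1"
    using member_le_sum[of i S "\<lambda>i. (u i)\<^sup>2"] assms unfolding sq_norm_def by simp
  thus ?thesis by (simp add: abs_square_le_1)
qed

lemma mat_vec_scale: "mat_vec J M (\<lambda>j. c * v j) i = c * mat_vec J M v i"
  unfolding mat_vec_def by (simp add: sum_distrib_left algebra_simps)

lemma abs_sum_mult_le_sq_norms: "\<bar>\<Sum>i\<in>I. a i * b i\<bar> \<le> sqrt (sq_norm I a) * sqrt (sq_norm I b)"
proof -
  have "(\<Sum>i\<in>I. a i * b i)\<^sup>2 \<le> sq_norm I a * sq_norm I b"
    unfolding sq_norm_def by (rule Cauchy_Schwarz_ineq_sum)
  hence "sqrt ((\<Sum>i\<in>I. a i * b i)\<^sup>2) \<le> sqrt (sq_norm I a * sq_norm I b)"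
    by (rule real_sqrt_le_mono)
  thus ?thesis by (simp add: real_sqrt_mult)
qed

lemma sum_mult_le_sq_norms: "(\<Sum>i\<in>I. a i * b i) \<le> sqrt (sq_norm I a) * sqrt (sq_norm I b)"
  using abs_sum_mult_le_sq_norms[of a b I] by linarith

lemma sq_norm_mat_vec_le_frob2: "sq_norm I (mat_vec J M v) \<le> frob2 I J M * sq_norm J v"
proof -
  have "sq_norm I (mat_vec J M v) = (\<Sum>i\<in>I. (\<Sum>j\<in>J. M i j * v j)\<^sup>2)"
    by (simp add: sq_norm_def mat_vec_def)
  also have "\<dots> \<le> (\<Sum>i\<in>I. (\<Sum>j\<in>J. (M i j)\<^sup>2) * sq_norm J v)"
    by (intro sum_mono) (simp add: sq_norm_def Cauchy_Schwarz_ineq_sum)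
  also have "\<dots> = frob2 I J M * sq_norm J v"
    by (simp add: frob2_def sum_distrib_right)
  finally show ?thesis .
qed

lemma frob2_nonneg: "0 \<le> frob2 I J M"
  unfolding frob2_def by (auto intro!: sum_nonneg)

lemma frob2_cong:
  "(\<And>i j. i \<in> I \<Longrightarrow> j \<in> J \<Longrightarrow> M1 i j = M2 i j) \<Longrightarrow> frob2 I J M1 = frob2 I J M2"
  unfolding frob2_def by (intro sum.cong refl) auto

lemma opnorm_eq_Sup:
  "opnorm I J M = Sup {sqrt (sq_norm I (mat_vec J M v)) | v. sq_norm J v \<le> 1}"
  unfolding opnorm_def sq_norm_def mat_vec_def by simp

lemma bdd_above_opnorm_set: "bdd_above {sqrt (sq_norm I (mat_vec J M v)) | v. sq_norm J v \<le> 1}"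
proof (rule bdd_aboveI, safe)
  fix v :: "nat \<Rightarrow> real" assume v: "sq_norm J v \<le> 1"
  have "sq_norm I (mat_vec J M v) \<le> frob2 I J M * sq_norm J v" by (rule sq_norm_mat_vec_le_frob2)
  also have "\<dots> \<le> frob2 I J M" using v frob2_nonneg[of I J M] by (simp add: mult_left_le)
  finally show "sqrt (sq_norm I (mat_vec J M v)) \<le> sqrt (frob2 I J M)" by simp
qed

lemma opnorm_upper: "sq_norm J v \<le> 1 \<Longrightarrow> sqrt (sq_norm I (mat_vec J M v)) \<le> opnorm I J M"
  unfolding opnorm_eq_Sup by (rule cSup_upper[OF _ bdd_above_opnorm_set]) auto

lemma opnorm_least:
  assumes "\<And>v. sq_norm J v \<le> 1 \<Longrightarrow> sqrt (sq_norm I (mat_vec J M v)) \<le> c"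
  shows "opnorm I J M \<le> c"
proof -
  have "sq_norm J (\<lambda>_. 0) \<le> 1" by (simp add: sq_norm_def)
  thus ?thesis unfolding opnorm_eq_Sup using assms by (intro cSup_least) auto
qed

lemma opnorm_nonneg: "0 \<le> opnorm I J M"
proof -
  have "sqrt (sq_norm I (mat_vec J M (\<lambda>_. 0))) \<le> opnorm I J M"
    by (rule opnorm_upper) (simp add: sq_norm_def)
  thus ?thesis by (simp add: sq_norm_def mat_vec_def)
qed

lemma sq_norm_mat_vec_le_opnorm:
  assumes "finite J"
  shows "sqrt (sq_norm I (mat_vec J M w)) \<le> opnorm I J M * sqrt (sq_norm J w)"
proof (cases "sq_norm J w = 0")
  case True
  hence "mat_vec J M w = (\<lambda>_. 0)"
    using sq_norm_eq_0_iff[OF assms] by (simp add: mat_vec_def)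
  thus ?thesis using True by (simp add: sq_norm_def)
next
  case False
  define s where "s = sqrt (sq_norm J w)"
  have s: "s > 0" using False unfolding s_def by (simp add: order_less_le)
  have "sq_norm J (\<lambda>j. (1/s) * w j) = 1"
    using s unfolding sq_norm_scale s_def by (simp add: power_divide)
  hence "sqrt (sq_norm I (mat_vec J M (\<lambda>j. (1/s) * w j))) \<le> opnorm I J M"
    by (intro opnorm_upper) simp
  moreover have "mat_vec J M (\<lambda>j. (1/s) * w j) = (\<lambda>i. (1/s) * mat_vec J M w i)"
    by (rule ext, rule mat_vec_scale)
  ultimately have "(1/s) * sqrt (sq_norm I (mat_vec J M w)) \<le> opnorm I J M"
    using s by (simp only: sq_norm_scale real_sqrt_mult) simp
  thus ?thesis using s unfolding s_def[symmetric] by (simp add: field_simps)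
qed

lemma abs_bilinear_le_opnorm:
  assumes "finite J"
  shows "\<bar>\<Sum>i\<in>I. a i * mat_vec J M b i\<bar> \<le> sqrt (sq_norm I a) * opnorm I J M * sqrt (sq_norm J b)"
proof -
  have "\<bar>\<Sum>i\<in>I. a i * mat_vec J M b i\<bar> \<le> sqrt (sq_norm I a) * sqrt (sq_norm I (mat_vec J M b))"
    by (rule abs_sum_mult_le_sq_norms)
  also have "\<dots> \<le> sqrt (sq_norm I a) * (opnorm I J M * sqrt (sq_norm J b))"
    by (intro mult_left_mono sq_norm_mat_vec_le_opnorm assms) simp
  finally show ?thesis by (simp add: mult.assoc)
qed

lemma opnorm_add_le: "opnorm I J (\<lambda>i j. M1 i j + M2 i j) \<le> opnorm I J M1 + opnorm I J M2"
proof (rule opnorm_least)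
  fix v assume v: "sq_norm J v \<le> 1"
  have "sqrt (sq_norm I (mat_vec J (\<lambda>i j. M1 i j + M2 i j) v))
      = L2_set (\<lambda>i. mat_vec J M1 v i + mat_vec J M2 v i) I"
    unfolding sq_norm_def L2_set_def mat_vec_def by (simp add: algebra_simps sum.distrib)
  also have "\<dots> \<le> L2_set (mat_vec J M1 v) I + L2_set (mat_vec J M2 v) I"
    by (rule L2_set_triangle_ineq)
  also have "\<dots> \<le> opnorm I J M1 + opnorm I J M2"
    using opnorm_upper[OF v, of I M1] opnorm_upper[OF v, of I M2]
    unfolding sq_norm_def L2_set_def by simp
  finally show "sqrt (sq_norm I (mat_vec J (\<lambda>i j. M1 i j + M2 i j) v)) \<le> opnorm I J M1 + opnorm I J M2" .
qed

lemma compact_unit_ball_on: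
  assumes "finite J"
  shows "compact {v::nat \<Rightarrow> real. (\<forall>j. v j \<in> (if j \<in> J then {-1..1} else {0})) \<and> sq_norm J v \<le> 1}"
proof -
  define S where "S = (\<lambda>j::nat. if j \<in> J then {-1..(1::real)} else {0})"
  have "compactin (product_topology (\<lambda>_. euclidean) UNIV) (PiE UNIV S)"
    by (subst compactin_PiE) (auto simp: S_def)
  hence "compact (PiE UNIV S)" by (simp add: euclidean_product_topology)
  moreover have "closed {v::nat \<Rightarrow> real. sq_norm J v \<le> 1}"
    unfolding sq_norm_def
    by (intro closed_Collect_le continuous_intros continuous_on_product_coordinates)
  ultimately have "compact (PiE UNIV S \<inter> {v. sq_norm J v \<le> 1})" by blast
  moreover have "{v. (\<forall>j. v j \<in> S j) \<and> sq_norm J v \<le> 1} = PiE UNIV S \<inter> {v. sq_norm J v \<le> 1}"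
    by (auto simp: PiE_UNIV_domain)
  ultimately show ?thesis unfolding S_def by simp
qed

lemma opnorm_attained:
  assumes "finite I" "finite J"
  obtains v where "sq_norm J v \<le> 1" "sqrt (sq_norm I (mat_vec J M v)) = opnorm I J M"
proof -
  define g where "g v = sqrt (sq_norm I (mat_vec J M v))" for v
  define B where "B = {v::nat \<Rightarrow> real. (\<forall>j. v j \<in> (if j \<in> J then {-1..1} else {0})) \<and> sq_norm J v \<le> 1}"
  have "compact B" unfolding B_def by (rule compact_unit_ball_on[OF assms(2)])
  moreover have "(\<lambda>_. 0) \<in> B" unfolding B_def by (simp add: sq_norm_def)
  moreover have "continuous_on B g"
    unfolding g_def sq_norm_def mat_vec_def
    by (intro continuous_intros continuous_on_subset[OF continuous_on_product_coordinates]) auto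
  ultimately obtain v0 where v0: "v0 \<in> B" and max: "\<And>v. v \<in> B \<Longrightarrow> g v \<le> g v0"
    using continuous_attains_sup[of B g] by blast
  have "g v \<le> g v0" if v: "sq_norm J v \<le> 1" for v
  proof -
    define v' where "v' j = (if j \<in> J then v j else 0)" for j
    have "sq_norm J v' = sq_norm J v" unfolding sq_norm_def v'_def by simp
    hence "v' \<in> B"
      using v sq_norm_le_1_imp_abs_le_1[OF assms(2)] unfolding B_def v'_def by (auto simp: abs_le_iff)
    moreover have "mat_vec J M v' = mat_vec J M v" unfolding mat_vec_def v'_def by simp
    ultimately show ?thesis using max unfolding g_def by metis
  qed
  hence "opnorm I J M \<le> g v0" unfolding g_def by (intro opnorm_least)
  moreover have "g v0 \<le> opnorm I J M" using v0 unfolding g_def B_def by (intro opnorm_upper) simp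
  ultimately show ?thesis using that v0 unfolding g_def B_def by force
qed

section \<open>Best rank-one approximation\<close>

lemma frob2_minus_rank1:
  "frob2 I J (\<lambda>i j. A i j - u i * v j) =
     frob2 I J A - 2 * (\<Sum>i\<in>I. u i * mat_vec J A v i) + sq_norm I u * sq_norm J v"
proof -
  have "frob2 I J (\<lambda>i j. A i j - u i * v j) =
      (\<Sum>i\<in>I. \<Sum>j\<in>J. (A i j)\<^sup>2 - 2 * (u i * (A i j * v j)) + (u i)\<^sup>2 * (v j)\<^sup>2)"
    unfolding frob2_def by (intro sum.cong refl) (simp add: power2_eq_square algebra_simps)
  also have "\<dots> = frob2 I J A - 2 * (\<Sum>i\<in>I. u i * mat_vec J A v i) + sq_norm I u * sq_norm J v"
    by (simp add: sum.distrib sum_subtractf frob2_def mat_vec_def sq_norm_def sum_distrib_left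
        sum_distrib_right sum.swap[of _ J I])
  finally show ?thesis .
qed

lemma frob2_minus_rank1_ge:
  assumes "finite J" "R \<in> rank_le1"
  shows "frob2 I J A - (opnorm I J A)\<^sup>2 \<le> frob2 I J (\<lambda>i j. A i j - R i j)"
proof -
  obtain u v where R: "\<And>i j. R i j = u i * v j" using assms(2) unfolding rank_le1_def by blast
  define x where "x = sqrt (sq_norm I u) * sqrt (sq_norm J v)"
  define \<sigma> where "\<sigma> = opnorm I J A"
  have "(\<Sum>i\<in>I. u i * mat_vec J A v i) \<le> \<sigma> * x"
    using abs_bilinear_le_opnorm[OF assms(1), where a=u and M=A and b=v and I=I] unfolding x_def \<sigma>_def
    by (simp add: algebra_simps)
  moreover have "x\<^sup>2 = sq_norm I u * sq_norm J v" unfolding x_def by (simp add: power_mult_distrib)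
  moreover have "2 * (\<sigma> * x) \<le> x\<^sup>2 + \<sigma>\<^sup>2"
    using zero_le_power2[of "x - \<sigma>"] by (simp add: power2_diff algebra_simps)
  ultimately show ?thesis
    unfolding R frob2_minus_rank1 \<sigma>_def[symmetric] by linarith
qed

text \<open>A maximising direction \<open>v\<close> of the operator norm gives the rank-one matrix
  \<open>(A v) v\<^sup>T\<close>, for which the bound above is attained.\<close>

lemma frob2_minus_rank1_attains:
  assumes "finite I" "finite J"
  obtains R where "R \<in> rank_le1" "frob2 I J (\<lambda>i j. A i j - R i j) \<le> frob2 I J A - (opnorm I J A)\<^sup>2"
proof -
  obtain v where v: "sq_norm J v \<le> 1" and \<sigma>: "sqrt (sq_norm I (mat_vec J A v)) = opnorm I J A"
    using opnorm_attained[OF assms] .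
  define y where "y = mat_vec J A v"
  have y: "sq_norm I y = (opnorm I J A)\<^sup>2" using \<sigma> unfolding y_def
    by (metis real_sqrt_pow2 sq_norm_nonneg)
  have "(\<Sum>i\<in>I. y i * mat_vec J A v i) = sq_norm I y"
    unfolding y_def sq_norm_def by (simp add: power2_eq_square)
  hence "frob2 I J (\<lambda>i j. A i j - y i * v j) = frob2 I J A - 2 * sq_norm I y + sq_norm I y * sq_norm J v"
    by (simp add: frob2_minus_rank1)
  also have "\<dots> \<le> frob2 I J A - sq_norm I y"
    using v mult_left_le[OF v sq_norm_nonneg[of I y]] by linarith
  moreover have "(\<lambda>i j. y i * v j) \<in> rank_le1" unfolding rank_le1_def by blast
  ultimately show ?thesis using that y by simp
qed

lemma best_rank1_spec:
  assumes "finite I" "finite J"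
  shows "best_rank1 I J Y \<in> rank_le1 \<and>
    (\<forall>R'\<in>rank_le1. frob2 I J (\<lambda>i j. Y i j - best_rank1 I J Y i j) \<le> frob2 I J (\<lambda>i j. Y i j - R' i j))"
proof -
  obtain R where "R \<in> rank_le1" "frob2 I J (\<lambda>i j. Y i j - R i j) \<le> frob2 I J Y - (opnorm I J Y)\<^sup>2"
    using frob2_minus_rank1_attains[OF assms] .
  hence "\<exists>R. R \<in> rank_le1 \<and>
      (\<forall>R'\<in>rank_le1. frob2 I J (\<lambda>i j. Y i j - R i j) \<le> frob2 I J (\<lambda>i j. Y i j - R' i j))"
    using frob2_minus_rank1_ge[OF assms(2)] by (meson order_trans)
  from someI_ex[OF this] show ?thesis unfolding best_rank1_def .
qed

section \<open>Finite nets of unit balls\<close>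

lemma sum_pow2_diff_atMost: "(\<Sum>c\<le>N. (2::nat)^(N-c)) + 1 = 2^(Suc N)"
proof (induction N)
  case 0 then show ?case by simp
next
  case (Suc N)
  have "(\<Sum>c\<le>Suc N. (2::nat)^(Suc N-c)) = 1 + 2 * (\<Sum>c\<le>N. 2^(N-c))"
    by (simp add: atMost_Suc sum_distrib_left Suc_diff_le flip: power_Suc)
  thus ?case using Suc by simp
qed

definition nat_vecs_le :: "'a set \<Rightarrow> nat \<Rightarrow> ('a \<Rightarrow> nat) set" where
  "nat_vecs_le R N = {m. (\<forall>i. i \<notin> R \<longrightarrow> m i = 0) \<and> (\<Sum>i\<in>R. m i) \<le> N}"

definition int_vecs_le :: "'a set \<Rightarrow> nat \<Rightarrow> ('a \<Rightarrow> int) set" where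
  "int_vecs_le R N = {m. (\<forall>i. i \<notin> R \<longrightarrow> m i = 0) \<and> (\<Sum>i\<in>R. \<bar>m i\<bar>) \<le> int N}"

text \<open>Splitting off the coordinate \<open>a\<close> embeds \<open>nat_vecs_le (insert a R) N\<close> into
  \<open>\<Sigma>c\<le>N. nat_vecs_le R (N - c)\<close>.\<close>

lemma card_nat_vecs_le:
  assumes "finite R"
  shows "finite (nat_vecs_le R N) \<and> card (nat_vecs_le R N) \<le> 2^(card R + N)"
  using assms
proof (induction R arbitrary: N rule: finite_induct)
  case empty
  have "nat_vecs_le ({}::'a set) N = {\<lambda>_. 0}" unfolding nat_vecs_le_def by auto
  thus ?case by simp
next
  case (insert a R)
  define \<phi> where "\<phi> m = (m a, m(a:=0))" for m :: "'a \<Rightarrow> nat"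
  define T where "T = Sigma {..N} (\<lambda>c. nat_vecs_le R (N - c))"
  have inj: "inj_on \<phi> (nat_vecs_le (insert a R) N)"
  proof (rule inj_onI)
    fix x y assume "\<phi> x = \<phi> y"
    hence "x a = y a" "x(a:=0) = y(a:=0)" unfolding \<phi>_def by auto
    thus "x = y" by (metis fun_upd_triv fun_upd_upd)
  qed
  have sub: "\<phi> ` nat_vecs_le (insert a R) N \<subseteq> T"
  proof (rule image_subsetI)
    fix m assume m: "m \<in> nat_vecs_le (insert a R) N"
    have s: "m a + (\<Sum>i\<in>R. m i) \<le> N" using m insert.hyps unfolding nat_vecs_le_def by simp
    have "(\<Sum>i\<in>R. (m(a:=0)) i) = (\<Sum>i\<in>R. m i)"
      using insert.hyps by (intro sum.cong) auto
    thus "\<phi> m \<in> T" using m s unfolding T_def \<phi>_def nat_vecs_le_def by auto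
  qed
  have fT: "finite T" unfolding T_def using insert.IH by auto
  have "card T = (\<Sum>c\<le>N. card (nat_vecs_le R (N - c)))" unfolding T_def
    by (rule card_SigmaI) (use insert.IH in auto)
  also have "\<dots> \<le> (\<Sum>c\<le>N. 2^(card R + (N - c)))"
    using insert.IH by (intro sum_mono) blast
  also have "\<dots> = 2^(card R) * (\<Sum>c\<le>N. 2^(N - c))"
    unfolding sum_distrib_left by (intro sum.cong refl) (simp only: power_add)
  also have "\<dots> \<le> 2^(card R) * 2^(Suc N)" using sum_pow2_diff_atMost[of N] by simp
  also have "\<dots> = 2^(card (insert a R) + N)" using insert.hyps by (simp add: power_add)
  finally have "card T \<le> 2^(card (insert a R) + N)" .
  moreover have "card (nat_vecs_le (insert a R) N) \<le> card T"
    using card_image[OF inj] card_mono[OF fT sub] by simp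
  moreover have "finite (nat_vecs_le (insert a R) N)"
    using inj sub fT by (meson finite_imageD finite_subset)
  ultimately show ?case by simp
qed

lemma card_int_vecs_le:
  assumes "finite R"
  shows "finite (int_vecs_le R N) \<and> card (int_vecs_le R N) \<le> 2^(2 * (card R + N))"
proof -
  define \<psi> where "\<psi> m = (\<lambda>i. nat (m i), \<lambda>i. nat (- m i))" for m :: "'a \<Rightarrow> int"
  have inj: "inj_on \<psi> (int_vecs_le R N)"
  proof (rule inj_onI)
    fix x y assume "\<psi> x = \<psi> y"
    hence "nat (x i) = nat (y i)" "nat (- x i) = nat (- y i)" for i
      unfolding \<psi>_def by (simp_all add: fun_eq_iff)
    moreover have "z = int (nat z) - int (nat (- z))" for z :: int by simp
    ultimately show "x = y" by (metis ext)
  qed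
  have sub: "\<psi> ` int_vecs_le R N \<subseteq> nat_vecs_le R N \<times> nat_vecs_le R N"
  proof (rule image_subsetI)
    fix m assume m: "m \<in> int_vecs_le R N"
    have "(\<Sum>i\<in>R. int (nat (m i))) \<le> (\<Sum>i\<in>R. \<bar>m i\<bar>)"
      "(\<Sum>i\<in>R. int (nat (- m i))) \<le> (\<Sum>i\<in>R. \<bar>m i\<bar>)"
      by (intro sum_mono; simp)+
    moreover have "int (\<Sum>i\<in>R. nat (m i)) = (\<Sum>i\<in>R. int (nat (m i)))"
      "int (\<Sum>i\<in>R. nat (- m i)) = (\<Sum>i\<in>R. int (nat (- m i)))"
      by (rule of_nat_sum)+
    ultimately have "int (\<Sum>i\<in>R. nat (m i)) \<le> int N" "int (\<Sum>i\<in>R. nat (- m i)) \<le> int N"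
      using m unfolding int_vecs_le_def by auto
    hence "(\<Sum>i\<in>R. nat (m i)) \<le> N" "(\<Sum>i\<in>R. nat (- m i)) \<le> N"
      by (simp_all only: of_nat_le_iff)
    thus "\<psi> m \<in> nat_vecs_le R N \<times> nat_vecs_le R N"
      using m unfolding \<psi>_def nat_vecs_le_def int_vecs_le_def by auto
  qed
  have f: "finite (nat_vecs_le R N)" and c: "card (nat_vecs_le R N) \<le> 2^(card R + N)"
    using card_nat_vecs_le[OF assms] by auto
  have "card (int_vecs_le R N) \<le> card (nat_vecs_le R N \<times> nat_vecs_le R N)"
    using card_image[OF inj] sub f by (metis card_mono finite_SigmaI)
  also have "\<dots> \<le> 2^(card R + N) * 2^(card R + N)"
    using c by (simp add: card_cartesian_product mult_mono)
  also have "\<dots> = 2^(2 * (card R + N))" by (simp add: power_add[symmetric])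
  finally show ?thesis
    using inj sub f by (meson finite_SigmaI finite_imageD finite_subset)
qed

text \<open>Scaled lattice points of the unit ball of \<open>\<real>\<^sup>R\<close>; the mesh is chosen so that
  rounding towards zero moves a unit vector by at most \<open>1/4\<close>.\<close>

definition grid_step :: "'a set \<Rightarrow> real" where
  "grid_step R = 1 / (4 * sqrt (real (card R)))"

definition grid_net :: "'a set \<Rightarrow> ('a \<Rightarrow> real) set" where
  "grid_net R = {w. (\<exists>m\<in>int_vecs_le R (4 * card R). w = (\<lambda>i. grid_step R * of_int (m i)))
                    \<and> sq_norm R w \<le> 1}"

lemma card_grid_net:
  assumes "finite R"
  shows "finite (grid_net R) \<and> card (grid_net R) \<le> 2^(10 * card R)"
proof -
  let ?M = "int_vecs_le R (4 * card R)"
  have sub: "grid_net R \<subseteq> (\<lambda>m i. grid_step R * of_int (m i)) ` ?M"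
    unfolding grid_net_def by auto
  have "2 * (card R + 4 * card R) = 10 * card R" by simp
  hence f: "finite ?M" and c: "card ?M \<le> 2^(10 * card R)"
    using card_int_vecs_le[OF assms, of "4 * card R"] by metis+
  have "card (grid_net R) \<le> card ?M"
    using card_mono[OF finite_imageI[OF f] sub]
      card_image_le[OF f, of "\<lambda>m i. grid_step R * of_int (m i)"] by linarith
  also have "\<dots> \<le> 2^(10 * card R)" by (rule c)
  finally show ?thesis using sub f by (meson finite_imageI finite_subset)
qed

lemma grid_net_sq_norm_le: "w \<in> grid_net R \<Longrightarrow> sq_norm R w \<le> 1"
  unfolding grid_net_def by auto

lemma grid_net_vanishes: "w \<in> grid_net R \<Longrightarrow> i \<notin> R \<Longrightarrow> w i = 0"
  unfolding grid_net_def int_vecs_le_def by auto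

lemma zero_in_grid_net: "(\<lambda>_. 0) \<in> grid_net R"
  unfolding grid_net_def int_vecs_le_def sq_norm_def by (auto intro!: bexI[of _ "\<lambda>_. 0"])

lemma int_toward_zero: "\<exists>m::int. \<bar>of_int m\<bar> \<le> \<bar>x::real\<bar> \<and> \<bar>x - of_int m\<bar> \<le> 1"
proof (cases "x \<ge> 0")
  case True
  thus ?thesis by (intro exI[of _ "\<lfloor>x\<rfloor>"]) (simp add: abs_le_iff; linarith)
next
  case False
  thus ?thesis by (intro exI[of _ "\<lceil>x\<rceil>"]) (simp add: abs_le_iff; linarith)
qed

lemma sum_abs_le_sqrt_card: "(\<Sum>i\<in>R. \<bar>u i\<bar>) \<le> sqrt (real (card R)) * sqrt (sq_norm R u)"
  using sum_mult_le_sq_norms[of "\<lambda>_. 1" "\<lambda>i. \<bar>u i\<bar>" R] by (simp add: sq_norm_def)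

lemma grid_net_approx:
  assumes fR: "finite R" and u: "sq_norm R u \<le> 1"
  shows "\<exists>w\<in>grid_net R. sq_norm R (\<lambda>i. u i - w i) \<le> 1/16"
proof (cases "R = {}")
  case True
  thus ?thesis using zero_in_grid_net by (auto simp: sq_norm_def)
next
  case False
  define d where "d = real (card R)"
  have d: "d > 0" using False fR unfolding d_def by (simp add: card_gt_0_iff)
  define h where "h = grid_step R"
  have h: "h > 0" "h * (4 * sqrt d) = 1" using d unfolding h_def grid_step_def d_def by auto
  have "\<forall>i. \<exists>m::int. \<bar>of_int m\<bar> \<le> \<bar>u i / h\<bar> \<and> \<bar>u i / h - of_int m\<bar> \<le> 1"
    using int_toward_zero by blast
  then obtain m0 where m0: "\<And>i. \<bar>of_int (m0 i)\<bar> \<le> \<bar>u i / h\<bar> \<and> \<bar>u i / h - of_int (m0 i)\<bar> \<le> 1"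
    by metis
  define m where "m i = (if i \<in> R then m0 i else 0)" for i
  define w where "w i = h * of_int (m i)" for i
  have wu: "\<bar>w i\<bar> \<le> \<bar>u i\<bar>" and uw: "\<bar>u i - w i\<bar> \<le> h" if "i \<in> R" for i
  proof -
    have "u i - w i = h * (u i / h - of_int (m0 i))" "w i = h * of_int (m0 i)"
      using h that unfolding w_def m_def by (auto simp: field_simps)
    thus "\<bar>w i\<bar> \<le> \<bar>u i\<bar>" "\<bar>u i - w i\<bar> \<le> h"
      using m0[of i] h by (auto simp: abs_mult field_simps mult_left_le)
  qed
  have "sq_norm R w \<le> sq_norm R u"
    unfolding sq_norm_def using wu by (intro sum_mono) (simp add: abs_le_square_iff)
  hence nw: "sq_norm R w \<le> 1" using u by linarith
  have "sqrt d * sqrt (sq_norm R u) \<le> sqrt d" using u d by (intro mult_left_le) auto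
  hence sumabs: "(\<Sum>i\<in>R. \<bar>u i\<bar>) \<le> sqrt d"
    using sum_abs_le_sqrt_card[of u R] unfolding d_def by linarith
  have "of_int (\<Sum>i\<in>R. \<bar>m i\<bar>) \<le> (\<Sum>i\<in>R. \<bar>u i\<bar> / h)"
    using m0 h unfolding m_def by (auto intro: sum_mono simp: abs_div)
  also have "\<dots> \<le> sqrt d / h"
    using sumabs h by (simp add: sum_divide_distrib[symmetric] divide_right_mono)
  also have "\<dots> = 4 * d"
  proof -
    have "h = 1 / (4 * sqrt d)" using h(2) d by (simp add: eq_divide_eq)
    thus ?thesis using d by simp
  qed
  finally have "(\<Sum>i\<in>R. \<bar>m i\<bar>) \<le> int (4 * card R)" unfolding d_def by linarith
  hence "m \<in> int_vecs_le R (4 * card R)" unfolding int_vecs_le_def m_def by simp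
  hence "w \<in> grid_net R" using nw unfolding grid_net_def w_def h_def by blast
  moreover have "sq_norm R (\<lambda>i. u i - w i) \<le> (\<Sum>i\<in>R. h\<^sup>2)"
    unfolding sq_norm_def using uw h by (intro sum_mono) (metis abs_of_pos abs_le_square_iff)
  moreover have "(\<Sum>i\<in>R. h\<^sup>2) = 1/16"
  proof -
    have "(h * (4 * sqrt d))\<^sup>2 = 1" using h by simp
    thus ?thesis using d unfolding d_def by (simp add: power_mult_distrib algebra_simps)
  qed
  ultimately show ?thesis by (metis order_trans)
qed

lemma grid_net_approx_within:
  assumes "finite T" "S \<subseteq> T" "sq_norm S u \<le> 1" "\<forall>i. i \<notin> S \<longrightarrow> u i = 0"
  shows "\<exists>w\<in>grid_net S. sqrt (sq_norm T w) \<le> 1 \<and> sqrt (sq_norm T (\<lambda>i. u i - w i)) \<le> 1/4"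
proof -
  obtain w where w: "w \<in> grid_net S" "sq_norm S (\<lambda>i. u i - w i) \<le> 1/16"
    using grid_net_approx[OF finite_subset[OF assms(2,1)] assms(3)] by blast
  have "sq_norm T w = sq_norm S w" "sq_norm T (\<lambda>i. u i - w i) = sq_norm S (\<lambda>i. u i - w i)"
    using assms grid_net_vanishes[OF w(1)] by (auto intro!: sq_norm_cong_support)
  moreover have "sqrt (sq_norm S (\<lambda>i. u i - w i)) \<le> 1/4"
    using real_sqrt_le_mono[OF w(2)] by (simp add: real_sqrt_divide)
  ultimately show ?thesis using w(1) grid_net_sq_norm_le[OF w(1)] by (intro bexI[of _ w]) auto
qed

section \<open>A net argument for block operator norms\<close>

definition active_blocks :: "'b set \<Rightarrow> ('b \<Rightarrow> 'a set) \<Rightarrow> 'b set" where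
  "active_blocks B S = {p \<in> B. S p \<noteq> {}}"

definition block_net :: "'b set \<Rightarrow> ('b \<Rightarrow> nat set) \<Rightarrow> ('b \<Rightarrow> nat set)
    \<Rightarrow> (('b \<Rightarrow> nat \<Rightarrow> real) \<times> ('b \<Rightarrow> nat \<Rightarrow> real) \<times> ('b \<Rightarrow> real)) set" where
  "block_net B S T = PiE B (\<lambda>p. grid_net (S p)) \<times> PiE B (\<lambda>p. grid_net (T p))
                      \<times> grid_net (active_blocks B S)"

definition block_form :: "'b set \<Rightarrow> ('b \<Rightarrow> nat set) \<Rightarrow> ('b \<Rightarrow> nat set) \<Rightarrow> (nat \<Rightarrow> nat \<Rightarrow> real)
    \<Rightarrow> ('b \<Rightarrow> nat \<Rightarrow> real) \<Rightarrow> ('b \<Rightarrow> nat \<Rightarrow> real) \<Rightarrow> ('b \<Rightarrow> real) \<Rightarrow> real" where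
  "block_form B I J E U V X = (\<Sum>p\<in>B. X p * (\<Sum>i\<in>I p. U p i * mat_vec (J p) E (V p) i))"

lemma card_PiE_grid_net:
  assumes "finite B" "\<And>p. p \<in> B \<Longrightarrow> finite (S p)"
  shows "finite (PiE B (\<lambda>p. grid_net (S p))) \<and>
         card (PiE B (\<lambda>p. grid_net (S p))) \<le> 2^(10 * (\<Sum>p\<in>B. card (S p)))"
proof -
  have "card (PiE B (\<lambda>p. grid_net (S p))) = (\<Prod>p\<in>B. card (grid_net (S p)))"
    by (rule card_PiE[OF assms(1)])
  also have "\<dots> \<le> (\<Prod>p\<in>B. 2^(10 * card (S p)))"
    using card_grid_net assms(2) by (intro prod_mono) auto
  also have "\<dots> = 2^(10 * (\<Sum>p\<in>B. card (S p)))"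
    by (simp add: power_sum sum_distrib_left)
  finally show ?thesis using assms card_grid_net by (auto intro: finite_PiE)
qed

lemma card_active_blocks:
  assumes "finite B" "\<And>p. p \<in> B \<Longrightarrow> finite (S p)"
  shows "card (active_blocks B S) \<le> (\<Sum>p\<in>B. card (S p))"
proof -
  have "card (active_blocks B S) = (\<Sum>p\<in>active_blocks B S. 1)" by simp
  also have "\<dots> \<le> (\<Sum>p\<in>active_blocks B S. card (S p))"
    using assms(2) by (intro sum_mono) (auto simp: active_blocks_def Suc_le_eq card_gt_0_iff)
  also have "\<dots> \<le> (\<Sum>p\<in>B. card (S p))"
    using assms(1) by (intro sum_mono2) (auto simp: active_blocks_def)
  finally show ?thesis .
qed

lemma card_block_net:
  assumes "finite B" "\<And>p. p \<in> B \<Longrightarrow> finite (S p)" "\<And>p. p \<in> B \<Longrightarrow> finite (T p)"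
  shows "finite (block_net B S T) \<and>
         card (block_net B S T) \<le> 2^(20 * (\<Sum>p\<in>B. card (S p)) + 10 * (\<Sum>p\<in>B. card (T p)))"
proof -
  have fin_act: "finite (active_blocks B S)" using assms(1) by (simp add: active_blocks_def)
  note S = card_PiE_grid_net[OF assms(1,2)] and T = card_PiE_grid_net[OF assms(1,3)]
    and X = card_grid_net[OF fin_act]
  have "card (block_net B S T) \<le>
      2^(10 * (\<Sum>p\<in>B. card (S p))) * (2^(10 * (\<Sum>p\<in>B. card (T p))) * 2^(10 * card (active_blocks B S)))"
    unfolding block_net_def card_cartesian_product using S T X by (intro mult_mono) auto
  also have "\<dots> \<le> 2^(10 * (\<Sum>p\<in>B. card (S p))) * (2^(10 * (\<Sum>p\<in>B. card (T p))) * 2^(10 * (\<Sum>p\<in>B. card (S p))))"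
    using card_active_blocks[OF assms(1,2)] by (intro mult_left_mono power_increasing) auto
  also have "\<dots> = 2^(20 * (\<Sum>p\<in>B. card (S p)) + 10 * (\<Sum>p\<in>B. card (T p)))"
    by (simp flip: power_add)
  finally show ?thesis using S T X unfolding block_net_def by auto
qed

locale block_support =
  fixes B :: "'b set" and rows cols srows scols :: "'b \<Rightarrow> nat set"
    and E :: "nat \<Rightarrow> nat \<Rightarrow> real"
  assumes finite_B: "finite B"
    and finite_rows: "p \<in> B \<Longrightarrow> finite (rows p)"
    and finite_cols: "p \<in> B \<Longrightarrow> finite (cols p)"
    and srows_subset: "p \<in> B \<Longrightarrow> srows p \<subseteq> rows p"
    and scols_subset: "p \<in> B \<Longrightarrow> scols p \<subseteq> cols p"
    and support: "p \<in> B \<Longrightarrow> i \<in> rows p \<Longrightarrow> j \<in> cols p \<Longrightarrow> E i j \<noteq> 0 \<Longrightarrow> i \<in> srows p \<and> j \<in> scols p"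
begin

abbreviation "opn p \<equiv> opnorm (rows p) (cols p) E"

abbreviation "form \<equiv> block_form B rows cols E"

lemma finite_srows: "p \<in> B \<Longrightarrow> finite (srows p)"
  using finite_rows srows_subset by (rule finite_subset[rotated])

lemma finite_scols: "p \<in> B \<Longrightarrow> finite (scols p)"
  using finite_cols scols_subset by (rule finite_subset[rotated])

lemma form_diff:
  "form u v x - form U V X =
     form (\<lambda>p i. u p i - U p i) v x + form U (\<lambda>p j. v p j - V p j) x + form U V (\<lambda>p. x p - X p)"
  unfolding block_form_def mat_vec_def
  by (simp add: algebra_simps sum_subtractf sum.distrib sum_distrib_left)

lemma abs_form_le:
  assumes "\<And>p. p \<in> B \<Longrightarrow> sqrt (sq_norm (rows p) (U p)) \<le> a"
    and "\<And>p. p \<in> B \<Longrightarrow> sqrt (sq_norm (cols p) (V p)) \<le> b"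
    and "sqrt (sq_norm B X) \<le> c" and "0 \<le> a" "0 \<le> b"
  shows "\<bar>form U V X\<bar> \<le> a * b * c * sqrt (\<Sum>p\<in>B. (opn p)\<^sup>2)"
proof -
  have "\<bar>form U V X\<bar> \<le> (\<Sum>p\<in>B. \<bar>X p\<bar> * \<bar>\<Sum>i\<in>rows p. U p i * mat_vec (cols p) E (V p) i\<bar>)"
    unfolding block_form_def by (rule order_trans[OF sum_abs]) (simp add: abs_mult)
  also have "\<dots> \<le> (\<Sum>p\<in>B. \<bar>X p\<bar> * (a * opn p * b))"
  proof (intro sum_mono mult_left_mono)
    fix p assume p: "p \<in> B"
    have "\<bar>\<Sum>i\<in>rows p. U p i * mat_vec (cols p) E (V p) i\<bar>
        \<le> sqrt (sq_norm (rows p) (U p)) * opn p * sqrt (sq_norm (cols p) (V p))"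
      by (rule abs_bilinear_le_opnorm[OF finite_cols[OF p]])
    also have "\<dots> \<le> a * opn p * b"
      using assms(1,2)[OF p] by (intro mult_mono) (auto simp: opnorm_nonneg assms)
    finally show "\<bar>\<Sum>i\<in>rows p. U p i * mat_vec (cols p) E (V p) i\<bar> \<le> a * opn p * b" .
  qed simp
  also have "\<dots> = a * b * (\<Sum>p\<in>B. \<bar>X p\<bar> * opn p)"
    by (simp add: sum_distrib_left algebra_simps)
  also have "(\<Sum>p\<in>B. \<bar>X p\<bar> * opn p) \<le> sqrt (sq_norm B X) * sqrt (\<Sum>p\<in>B. (opn p)\<^sup>2)"
    using sum_mult_le_sq_norms[of "\<lambda>p. \<bar>X p\<bar>" opn B] by (simp add: sq_norm_def)
  also have "\<dots> \<le> c * sqrt (\<Sum>p\<in>B. (opn p)\<^sup>2)"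
    using assms(3) by (intro mult_right_mono) (auto simp: sum_nonneg)
  finally show ?thesis using assms(4,5) by (simp add: mult_left_mono mult.assoc)
qed

lemma opnorm_inactive:
  assumes "p \<in> B" "p \<notin> active_blocks B srows"
  shows "opn p = 0"
proof -
  have "mat_vec (cols p) E v i = 0" if "i \<in> rows p" for v i
    using support[OF assms(1) that] assms unfolding active_blocks_def mat_vec_def
    by (intro sum.neutral) auto
  hence "opn p \<le> 0" by (intro opnorm_least) (simp add: sq_norm_def)
  thus ?thesis using opnorm_nonneg by (simp add: order_antisym)
qed

text \<open>A unit vector \<open>v\<close> attaining the operator norm of a block, restricted to \<open>scols p\<close>,
  together with the normalised image \<open>E v\<close>.\<close>

lemma exists_unit_pair_attaining:
  assumes p: "p \<in> B"
  obtains u v where "sq_norm (srows p) u \<le> 1" "\<forall>i. i \<notin> srows p \<longrightarrow> u i = 0"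
    "sq_norm (scols p) v \<le> 1" "\<forall>j. j \<notin> scols p \<longrightarrow> v j = 0"
    "(\<Sum>i\<in>rows p. u i * mat_vec (cols p) E v i) = opn p"
proof -
  obtain v0 where v0: "sq_norm (cols p) v0 \<le> 1" "sqrt (sq_norm (rows p) (mat_vec (cols p) E v0)) = opn p"
    using opnorm_attained[OF finite_rows[OF p] finite_cols[OF p]] .
  define v where "v j = (if j \<in> scols p then v0 j else 0)" for j
  define y where "y = mat_vec (cols p) E v"
  have y: "y i = mat_vec (cols p) E v0 i" if "i \<in> rows p" for i
    unfolding y_def mat_vec_def v_def using support[OF p that] by (intro sum.cong) auto
  have y_out: "y i = 0" if "i \<in> rows p" "i \<notin> srows p" for i
    unfolding y_def mat_vec_def using support[OF p that(1)] that(2) by (intro sum.neutral) auto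
  have "sq_norm (rows p) y = sq_norm (rows p) (mat_vec (cols p) E v0)"
    using y unfolding sq_norm_def by simp
  also have "\<dots> = (opn p)\<^sup>2"
    using v0(2) real_sqrt_pow2[OF sq_norm_nonneg, of "rows p" "mat_vec (cols p) E v0"] by simp
  finally have ny: "sq_norm (rows p) y = (opn p)\<^sup>2" .
  have ny': "sq_norm (srows p) y = sq_norm (rows p) y"
    using y_out srows_subset[OF p] finite_rows[OF p] by (intro sq_norm_cong_support[symmetric]) auto
  define u where "u i = (if i \<in> srows p then y i / opn p else 0)" for i
  have "sq_norm (srows p) u = sq_norm (srows p) y / (opn p)\<^sup>2"
    unfolding sq_norm_def u_def by (simp add: power_divide sum_divide_distrib)
  hence "sq_norm (srows p) u \<le> 1" using ny ny' by (cases "opn p = 0") auto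
  moreover have "sq_norm (scols p) v \<le> 1"
    using v0(1) sq_norm_mono_set[OF scols_subset[OF p] finite_cols[OF p], of v0]
    unfolding sq_norm_def v_def by simp
  moreover have "(\<Sum>i\<in>rows p. u i * mat_vec (cols p) E v i) = opn p"
  proof -
    have "(\<Sum>i\<in>rows p. u i * mat_vec (cols p) E v i) = (\<Sum>i\<in>rows p. (y i)\<^sup>2 / opn p)"
      using y_out unfolding y_def[symmetric] u_def by (intro sum.cong) (auto simp: power2_eq_square)
    also have "\<dots> = sq_norm (rows p) y / opn p" by (simp add: sq_norm_def sum_divide_distrib)
    also have "\<dots> = opn p" using ny by (simp add: power2_eq_square)
    finally show ?thesis .
  qed
  ultimately show ?thesis using that[of u v] unfolding u_def v_def by auto
qed

text \<open>The block weights \<open>x p\<close> are proportional to the operator norms \<open>opn p\<close>.\<close>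

lemma exists_form_eq_sqrt_sum_sq_opnorm:
  obtains u v x where
    "\<forall>p\<in>B. sq_norm (srows p) (u p) \<le> 1 \<and> (\<forall>i. i \<notin> srows p \<longrightarrow> u p i = 0)"
    "\<forall>p\<in>B. sq_norm (scols p) (v p) \<le> 1 \<and> (\<forall>j. j \<notin> scols p \<longrightarrow> v p j = 0)"
    "sq_norm (active_blocks B srows) x \<le> 1" "\<forall>p. p \<notin> active_blocks B srows \<longrightarrow> x p = 0"
    "form u v x = sqrt (\<Sum>p\<in>B. (opn p)\<^sup>2)"
proof -
  define N where "N = (\<Sum>p\<in>B. (opn p)\<^sup>2)"
  have "\<forall>p\<in>B. \<exists>uv. sq_norm (srows p) (fst uv) \<le> 1 \<and> (\<forall>i. i \<notin> srows p \<longrightarrow> fst uv i = 0)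
      \<and> sq_norm (scols p) (snd uv) \<le> 1 \<and> (\<forall>j. j \<notin> scols p \<longrightarrow> snd uv j = 0)
      \<and> (\<Sum>i\<in>rows p. fst uv i * mat_vec (cols p) E (snd uv) i) = opn p"
  proof
    fix p assume p: "p \<in> B"
    obtain u v where "sq_norm (srows p) u \<le> 1" "\<forall>i. i \<notin> srows p \<longrightarrow> u i = 0"
      "sq_norm (scols p) v \<le> 1" "\<forall>j. j \<notin> scols p \<longrightarrow> v j = 0"
      "(\<Sum>i\<in>rows p. u i * mat_vec (cols p) E v i) = opn p"
      using exists_unit_pair_attaining[OF p] .
    thus "\<exists>uv. sq_norm (srows p) (fst uv) \<le> 1 \<and> (\<forall>i. i \<notin> srows p \<longrightarrow> fst uv i = 0)
      \<and> sq_norm (scols p) (snd uv) \<le> 1 \<and> (\<forall>j. j \<notin> scols p \<longrightarrow> snd uv j = 0)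
      \<and> (\<Sum>i\<in>rows p. fst uv i * mat_vec (cols p) E (snd uv) i) = opn p"
      by (intro exI[of _ "(u, v)"]) auto
  qed
  from bchoice[OF this] obtain uv where uv: "\<forall>p\<in>B. sq_norm (srows p) (fst (uv p)) \<le> 1
      \<and> (\<forall>i. i \<notin> srows p \<longrightarrow> fst (uv p) i = 0)
      \<and> sq_norm (scols p) (snd (uv p)) \<le> 1 \<and> (\<forall>j. j \<notin> scols p \<longrightarrow> snd (uv p) j = 0)
      \<and> (\<Sum>i\<in>rows p. fst (uv p) i * mat_vec (cols p) E (snd (uv p)) i) = opn p"
    by blast
  define x where "x p = (if p \<in> active_blocks B srows then opn p / sqrt N else 0)" for p
  have N: "0 \<le> N" unfolding N_def by (simp add: sum_nonneg)
  have "sq_norm (active_blocks B srows) x = (\<Sum>p\<in>active_blocks B srows. (opn p)\<^sup>2 / N)"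
    unfolding sq_norm_def x_def using N by (simp add: power_divide)
  also have "\<dots> \<le> (\<Sum>p\<in>B. (opn p)\<^sup>2 / N)"
    using finite_B N by (intro sum_mono2) (auto simp: active_blocks_def)
  also have "\<dots> \<le> 1" by (simp add: sum_divide_distrib[symmetric] N_def)
  finally have "sq_norm (active_blocks B srows) x \<le> 1" .
  moreover have "form (\<lambda>p. fst (uv p)) (\<lambda>p. snd (uv p)) x = sqrt N"
  proof -
    have "form (\<lambda>p. fst (uv p)) (\<lambda>p. snd (uv p)) x = (\<Sum>p\<in>B. (opn p)\<^sup>2 / sqrt N)"
      unfolding block_form_def using uv opnorm_inactive
      by (intro sum.cong) (auto simp: x_def power2_eq_square)
    also have "\<dots> = N / sqrt N" by (simp add: sum_divide_distrib[symmetric] N_def)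
    also have "\<dots> = sqrt N" using real_div_sqrt[of N] by (simp add: N_def sum_nonneg)
    finally show ?thesis .
  qed
  ultimately show ?thesis using that[of "\<lambda>p. fst (uv p)" "\<lambda>p. snd (uv p)" x] uv
    unfolding x_def N_def by auto
qed

lemma exists_net_point_close:
  assumes u: "\<forall>p\<in>B. sq_norm (srows p) (u p) \<le> 1 \<and> (\<forall>i. i \<notin> srows p \<longrightarrow> u p i = 0)"
    and v: "\<forall>p\<in>B. sq_norm (scols p) (v p) \<le> 1 \<and> (\<forall>j. j \<notin> scols p \<longrightarrow> v p j = 0)"
    and x: "sq_norm (active_blocks B srows) x \<le> 1" "\<forall>p. p \<notin> active_blocks B srows \<longrightarrow> x p = 0"
  shows "\<exists>(U, V, X)\<in>block_net B srows scols. form u v x \<le> form U V X + 3/4 * sqrt (\<Sum>p\<in>B. (opn p)\<^sup>2)"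
proof -
  have act: "active_blocks B srows \<subseteq> B" by (auto simp: active_blocks_def)
  have "\<forall>p\<in>B. \<exists>w. w \<in> grid_net (srows p) \<and> sqrt (sq_norm (rows p) w) \<le> 1
      \<and> sqrt (sq_norm (rows p) (\<lambda>i. u p i - w i)) \<le> 1/4"
  proof
    fix p assume p: "p \<in> B"
    show "\<exists>w. w \<in> grid_net (srows p) \<and> sqrt (sq_norm (rows p) w) \<le> 1
      \<and> sqrt (sq_norm (rows p) (\<lambda>i. u p i - w i)) \<le> 1/4"
      using grid_net_approx_within[OF finite_rows[OF p] srows_subset[OF p], of "u p"] u p by blast
  qed
  from bchoice[OF this] obtain U where U: "\<forall>p\<in>B. U p \<in> grid_net (srows p)
      \<and> sqrt (sq_norm (rows p) (U p)) \<le> 1 \<and> sqrt (sq_norm (rows p) (\<lambda>i. u p i - U p i)) \<le> 1/4"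
    by blast
  have "\<forall>p\<in>B. \<exists>w. w \<in> grid_net (scols p) \<and> sqrt (sq_norm (cols p) w) \<le> 1
      \<and> sqrt (sq_norm (cols p) (\<lambda>j. v p j - w j)) \<le> 1/4"
  proof
    fix p assume p: "p \<in> B"
    show "\<exists>w. w \<in> grid_net (scols p) \<and> sqrt (sq_norm (cols p) w) \<le> 1
      \<and> sqrt (sq_norm (cols p) (\<lambda>j. v p j - w j)) \<le> 1/4"
      using grid_net_approx_within[OF finite_cols[OF p] scols_subset[OF p], of "v p"] v p by blast
  qed
  from bchoice[OF this] obtain V where V: "\<forall>p\<in>B. V p \<in> grid_net (scols p)
      \<and> sqrt (sq_norm (cols p) (V p)) \<le> 1 \<and> sqrt (sq_norm (cols p) (\<lambda>j. v p j - V p j)) \<le> 1/4"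
    by blast
  obtain X where X: "X \<in> grid_net (active_blocks B srows)" "sqrt (sq_norm B (\<lambda>p. x p - X p)) \<le> 1/4"
    using grid_net_approx_within[OF finite_B act x] by blast
  have "sq_norm (cols p) (v p) = sq_norm (scols p) (v p)" if "p \<in> B" for p
    using v that scols_subset finite_cols by (intro sq_norm_cong_support) auto
  hence nv: "sqrt (sq_norm (cols p) (v p)) \<le> 1" if "p \<in> B" for p using v that by simp
  have "sq_norm B x = sq_norm (active_blocks B srows) x"
    using x(2) act finite_B by (intro sq_norm_cong_support) auto
  hence nx: "sqrt (sq_norm B x) \<le> 1" using x(1) by simp
  have "form (\<lambda>p i. u p i - U p i) v x \<le> 1/4 * 1 * 1 * sqrt (\<Sum>p\<in>B. (opn p)\<^sup>2)"
    "form U (\<lambda>p j. v p j - V p j) x \<le> 1 * (1/4) * 1 * sqrt (\<Sum>p\<in>B. (opn p)\<^sup>2)"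
    "form U V (\<lambda>p. x p - X p) \<le> 1 * 1 * (1/4) * sqrt (\<Sum>p\<in>B. (opn p)\<^sup>2)"
    using U V X(2) nv nx by (intro abs_form_le[THEN abs_le_D1]; simp)+
  hence "form u v x \<le> form U V X + 3/4 * sqrt (\<Sum>p\<in>B. (opn p)\<^sup>2)"
    using form_diff[of u v x U V X] by linarith
  moreover have "form (restrict U B) (restrict V B) X = form U V X"
    unfolding block_form_def by (intro sum.cong) auto
  moreover have "(restrict U B, restrict V B, X) \<in> block_net B srows scols"
    unfolding block_net_def using U V X by auto
  ultimately show ?thesis by (intro bexI[of _ "(restrict U B, restrict V B, X)"]) auto
qed

text \<open>Rounding the maximising vectors to the nets loses at most three quarters of the
  maximum, whence the factor \<open>16 = 4\<^sup>2\<close>.\<close>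

lemma sum_sq_opnorm_le_net_max:
  assumes s: "\<forall>(U, V, X)\<in>block_net B srows scols. form U V X \<le> s"
  shows "(\<Sum>p\<in>B. (opn p)\<^sup>2) \<le> 16 * s\<^sup>2"
proof -
  define N where "N = (\<Sum>p\<in>B. (opn p)\<^sup>2)"
  obtain u v x where
    u: "\<forall>p\<in>B. sq_norm (srows p) (u p) \<le> 1 \<and> (\<forall>i. i \<notin> srows p \<longrightarrow> u p i = 0)" and
    v: "\<forall>p\<in>B. sq_norm (scols p) (v p) \<le> 1 \<and> (\<forall>j. j \<notin> scols p \<longrightarrow> v p j = 0)" and
    x: "sq_norm (active_blocks B srows) x \<le> 1" "\<forall>p. p \<notin> active_blocks B srows \<longrightarrow> x p = 0"
    and ux: "form u v x = sqrt N"
    unfolding N_def by (rule exists_form_eq_sqrt_sum_sq_opnorm)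
  obtain U V X where "(U, V, X) \<in> block_net B srows scols" "form u v x \<le> form U V X + 3/4 * sqrt N"
    using exists_net_point_close[OF u v x] unfolding N_def by auto
  hence "sqrt N \<le> s + 3/4 * sqrt N" using s ux by fastforce
  hence "(sqrt N)\<^sup>2 \<le> (4 * s)\<^sup>2" by (intro power_mono) (auto simp: N_def sum_nonneg)
  moreover have "(sqrt N)\<^sup>2 = N" unfolding N_def by (simp add: sum_nonneg)
  ultimately show ?thesis unfolding N_def by (simp add: power_mult_distrib)
qed

end

section \<open>Hoeffding's inequality for independent Bernoulli edges\<close>

lemma prob_weighted_bernoulli_sum_ge:
  fixes A :: "'e set" and q c :: "'e \<Rightarrow> real"
  assumes fA: "finite A" and q: "\<And>e. e \<in> A \<Longrightarrow> 0 \<le> q e \<and> q e \<le> 1"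
    and s: "s > 0" and D: "(\<Sum>e\<in>A. (c e)\<^sup>2) \<le> D" "D > 0"
  shows "measure_pmf.prob (Pi_pmf A False (\<lambda>e. bernoulli_pmf (q e)))
           {\<omega>. s \<le> (\<Sum>e\<in>A. c e * (of_bool (\<omega> e) - q e))} \<le> exp (- 2 * s\<^sup>2 / D)"
proof (cases "(\<Sum>e\<in>A. (c e)\<^sup>2) = 0")
  case True
  hence "\<forall>e\<in>A. c e = 0" using fA by (simp add: sum_nonneg_eq_0_iff)
  hence "{\<omega>. s \<le> (\<Sum>e\<in>A. c e * (of_bool (\<omega> e) - q e))} = {}" using s by auto
  thus ?thesis by simp
next
  case False
  define p where "p = Pi_pmf A False (\<lambda>e. bernoulli_pmf (q e))"
  define M where "M = measure_pmf p"
  define X where "X e \<omega> = c e * of_bool (\<omega> e)" for e and \<omega> :: "'e \<Rightarrow> bool"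
  define a where "a e = min 0 (c e)" for e
  define b where "b e = max 0 (c e)" for e
  have "prob_space.indep_vars M (\<lambda>_. count_space UNIV) (\<lambda>x f. f x) A"
    unfolding M_def p_def by (rule indep_vars_Pi_pmf[OF fA])
  hence "prob_space.indep_vars M (\<lambda>_. borel) (\<lambda>e \<omega>. c e * of_bool ((\<lambda>x f. f x) e \<omega>)) A"
    by (intro prob_space.indep_vars_compose2[where Y = "\<lambda>e b. c e * of_bool b"])
       (auto simp: M_def measure_pmf.prob_space_axioms)
  hence ind: "prob_space.indep_vars M (\<lambda>_. borel) X A" unfolding X_def by simp
  interpret H: Hoeffding_ineq M A X a b "\<Sum>e\<in>A. prob_space.expectation M (X e)"
  proof unfold_locales
    show "finite A" by (rule fA)
    show "prob_space.indep_vars M (\<lambda>_. borel) X A" by (rule ind)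
    fix e assume "e \<in> A"
    show "AE x in M. X e x \<in> {a e..b e}" unfolding X_def a_def b_def by (auto intro!: AE_I2)
  qed (auto simp: M_def measure_pmf.prob_space_axioms intro!: exI[of _ "{UNIV}"])
  have EX: "H.expectation (X e) = c e * q e" if "e \<in> A" for e
  proof -
    have "H.expectation (X e) = measure_pmf.expectation (map_pmf (\<lambda>\<omega>. \<omega> e) p) (\<lambda>b. c e * of_bool b)"
      unfolding M_def X_def by simp
    also have "map_pmf (\<lambda>\<omega>. \<omega> e) p = bernoulli_pmf (q e)"
      unfolding p_def using Pi_pmf_component[OF fA, of e False "\<lambda>e. bernoulli_pmf (q e)"] that by simp
    finally show ?thesis using q[OF that] by simp
  qed
  have bma: "(b e - a e)\<^sup>2 = (c e)\<^sup>2" for e unfolding a_def b_def by (cases "c e \<ge> 0") auto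
  have sumpos: "(\<Sum>e\<in>A. (b e - a e)\<^sup>2) > 0"
    unfolding bma using False by (simp add: less_le sum_nonneg)
  have "{\<omega>. s \<le> (\<Sum>e\<in>A. c e * (of_bool (\<omega> e) - q e))} =
      {x\<in>space M. (\<Sum>e\<in>A. X e x) \<ge> (\<Sum>e\<in>A. H.expectation (X e)) + s}"
    using EX by (auto simp: M_def X_def algebra_simps sum_subtractf)
  hence "measure_pmf.prob p {\<omega>. s \<le> (\<Sum>e\<in>A. c e * (of_bool (\<omega> e) - q e))} =
      H.prob {x\<in>space M. (\<Sum>e\<in>A. X e x) \<ge> (\<Sum>e\<in>A. H.expectation (X e)) + s}"
    by (simp add: M_def)
  also have "\<dots> \<le> exp (-2 * s\<^sup>2 / (\<Sum>e\<in>A. (b e - a e)\<^sup>2))"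
    by (rule H.Hoeffding_ineq_ge) (use s sumpos in auto)
  also have "\<dots> \<le> exp (- 2 * s\<^sup>2 / D)"
    unfolding bma using D sumpos[unfolded bma] s by (auto intro!: divide_left_mono)
  finally show ?thesis unfolding p_def .
qed

definition upper_pairs :: "nat \<Rightarrow> (nat \<times> nat) set" where
  "upper_pairs n = {(i, j). i \<le> j \<and> j < n}"

text \<open>The coefficient of the edge variable \<open>\<omega> (i, j)\<close>, \<open>i \<le> j\<close>, in \<open>\<Sum>i j. M i j * A i j\<close>.\<close>

definition pair_weight :: "(nat \<Rightarrow> nat \<Rightarrow> real) \<Rightarrow> nat \<times> nat \<Rightarrow> real" where
  "pair_weight M e = (case e of (a, b) \<Rightarrow> if a = b then M a a else M a b + M b a)"

lemma finite_upper_pairs: "finite (upper_pairs n)"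
  by (rule finite_subset[of _ "{..<n} \<times> {..<n}"]) (auto simp: upper_pairs_def)

lemma edge_pmf_eq_Pi_pmf:
  "edge_pmf n P = Pi_pmf (upper_pairs n) False (\<lambda>e. bernoulli_pmf (case e of (i, j) \<Rightarrow> P i j))"
  unfolding edge_pmf_def upper_pairs_def
  by (intro arg_cong[where f = "Pi_pmf _ False"]) (auto simp: fun_eq_iff)

lemma sum_square_eq_sum_upper_pairs:
  "(\<Sum>i<n. \<Sum>j<n. h i j) = (\<Sum>e\<in>upper_pairs n. case e of (a, b) \<Rightarrow> if a = b then h a a else h a b + h b a)"
proof -
  define g where "g = (\<lambda>(i::nat, j::nat). (min i j, max i j))"
  have "(\<Sum>i<n. \<Sum>j<n. h i j) = (\<Sum>x\<in>{..<n} \<times> {..<n}. case x of (i, j) \<Rightarrow> h i j)"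
    by (simp add: sum.cartesian_product)
  also have "\<dots> = (\<Sum>y\<in>upper_pairs n. \<Sum>x\<in>{x\<in>{..<n} \<times> {..<n}. g x = y}. case x of (i, j) \<Rightarrow> h i j)"
    by (rule sum.group[symmetric]) (use finite_upper_pairs in \<open>auto simp: g_def upper_pairs_def\<close>)
  also have "\<dots> = (\<Sum>e\<in>upper_pairs n. case e of (a, b) \<Rightarrow> if a = b then h a a else h a b + h b a)"
  proof (intro sum.cong refl)
    fix e assume "e \<in> upper_pairs n"
    then obtain a b where ab: "e = (a, b)" "a \<le> b" "b < n" unfolding upper_pairs_def by auto
    have "{x\<in>{..<n} \<times> {..<n}. g x = e} = (if a = b then {(a, a)} else {(a, b), (b, a)})"
      using ab unfolding g_def by (auto simp: min_def max_def split: if_splits)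
    thus "(\<Sum>x\<in>{x\<in>{..<n} \<times> {..<n}. g x = e}. case x of (i, j) \<Rightarrow> h i j)
        = (case e of (a, b) \<Rightarrow> if a = b then h a a else h a b + h b a)"
      using ab by auto
  qed
  finally show ?thesis .
qed

lemma sum_weighted_centered_adj:
  assumes sym: "\<forall>i<n. \<forall>j<n. P i j = P j i"
  shows "(\<Sum>i<n. \<Sum>j<n. M i j * (adj n \<omega> i j - P i j)) =
         (\<Sum>e\<in>upper_pairs n. pair_weight M e * (of_bool (\<omega> e) - (case e of (a, b) \<Rightarrow> P a b)))"
  unfolding sum_square_eq_sum_upper_pairs[of "\<lambda>i j. M i j * (adj n \<omega> i j - P i j)"]
proof (intro sum.cong refl)
  fix e assume "e \<in> upper_pairs n"
  then obtain a b where ab: "e = (a, b)" "a \<le> b" "b < n" unfolding upper_pairs_def by auto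
  have "adj n \<omega> a b = of_bool (\<omega> (a, b))" "adj n \<omega> b a = of_bool (\<omega> (a, b))"
    using ab unfolding adj_def by (auto simp: min_def max_def)
  moreover have "P b a = P a b" using sym ab by auto
  ultimately show "(case e of (a, b) \<Rightarrow> if a = b then M a a * (adj n \<omega> a a - P a a)
        else M a b * (adj n \<omega> a b - P a b) + M b a * (adj n \<omega> b a - P b a)) =
      pair_weight M e * (of_bool (\<omega> e) - (case e of (a, b) \<Rightarrow> P a b))"
    using ab unfolding pair_weight_def by (auto simp: algebra_simps)
qed

lemma sum_sq_pair_weight_le: "(\<Sum>e\<in>upper_pairs n. (pair_weight M e)\<^sup>2) \<le> 2 * (\<Sum>i<n. \<Sum>j<n. (M i j)\<^sup>2)"
proof -
  have "(\<Sum>e\<in>upper_pairs n. (pair_weight M e)\<^sup>2) \<le>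
      (\<Sum>e\<in>upper_pairs n. 2 * (case e of (a, b) \<Rightarrow> if a = b then (M a a)\<^sup>2 else (M a b)\<^sup>2 + (M b a)\<^sup>2))"
  proof (intro sum_mono)
    fix e :: "nat \<times> nat"
    obtain a b where ab: "e = (a, b)" by force
    have "(M a b + M b a)\<^sup>2 \<le> 2 * ((M a b)\<^sup>2 + (M b a)\<^sup>2)"
      using zero_le_power2[of "M a b - M b a"] by (simp add: power2_eq_square algebra_simps)
    thus "(pair_weight M e)\<^sup>2 \<le> 2 * (case e of (a, b) \<Rightarrow> if a = b then (M a a)\<^sup>2 else (M a b)\<^sup>2 + (M b a)\<^sup>2)"
      unfolding ab pair_weight_def by auto
  qed
  also have "\<dots> = 2 * (\<Sum>i<n. \<Sum>j<n. (M i j)\<^sup>2)"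
    by (simp add: sum_square_eq_sum_upper_pairs[of "\<lambda>i j. (M i j)\<^sup>2"] sum_distrib_left)
  finally show ?thesis .
qed

lemma prob_weighted_centered_adj_ge:
  assumes sym: "\<forall>i<n. \<forall>j<n. P i j = P j i" and P01: "\<forall>i<n. \<forall>j<n. 0 \<le> P i j \<and> P i j \<le> 1"
    and s: "s > 0" and D: "(\<Sum>i<n. \<Sum>j<n. (M i j)\<^sup>2) \<le> D" "D > 0"
  shows "measure_pmf.prob (edge_pmf n P) {\<omega>. s \<le> (\<Sum>i<n. \<Sum>j<n. M i j * (adj n \<omega> i j - P i j))}
           \<le> exp (- s\<^sup>2 / D)"
proof -
  define q where "q e = (case e of (a, b) \<Rightarrow> P a b)" for e
  have "0 \<le> q e \<and> q e \<le> 1" if "e \<in> upper_pairs n" for e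
    using that P01 unfolding q_def upper_pairs_def by auto
  moreover have "(\<Sum>e\<in>upper_pairs n. (pair_weight M e)\<^sup>2) \<le> 2 * D"
    using sum_sq_pair_weight_le[of M n] D by linarith
  ultimately have "measure_pmf.prob (Pi_pmf (upper_pairs n) False (\<lambda>e. bernoulli_pmf (q e)))
      {\<omega>. s \<le> (\<Sum>e\<in>upper_pairs n. pair_weight M e * (of_bool (\<omega> e) - q e))} \<le> exp (- 2 * s\<^sup>2 / (2 * D))"
    using D s by (intro prob_weighted_bernoulli_sum_ge finite_upper_pairs) auto
  thus ?thesis
    unfolding sum_weighted_centered_adj[OF sym] edge_pmf_eq_Pi_pmf q_def[symmetric] by simp
qed

lemma adj_eq_0_if_P_eq_0:
  assumes "\<omega> \<in> set_pmf (edge_pmf n P)" "P i j = 0" and sym: "\<forall>i<n. \<forall>j<n. P i j = P j i"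
  shows "adj n \<omega> i j = 0"
proof (cases "i < n \<and> j < n")
  case True
  define a where "a = min i j"
  define b where "b = max i j"
  have "(a, b) \<in> upper_pairs n" unfolding a_def b_def upper_pairs_def using True by auto
  hence "\<omega> (a, b) \<in> set_pmf (bernoulli_pmf (P a b))"
    using assms(1) unfolding edge_pmf_eq_Pi_pmf
    by (auto simp: set_Pi_pmf[OF finite_upper_pairs] PiE_dflt_def)
  moreover have "P a b = 0"
    using True assms(2) sym unfolding a_def b_def by (auto simp: min_def max_def)
  ultimately show ?thesis unfolding adj_def a_def b_def by (auto simp: set_pmf_iff)
qed (auto simp: adj_def)

lemma finite_comm: "finite (comm n z k)"
  unfolding comm_def by auto

lemma comm_subset: "comm n z k \<subseteq> {..<n}"
  unfolding comm_def by auto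

lemma labelings_range: "z \<in> labelings n K \<Longrightarrow> i < n \<Longrightarrow> z i < K"
  unfolding labelings_def by (auto simp: PiE_iff)

lemma finite_labelings: "finite (labelings n K)"
  by (rule finite_subset[of _ "{..<n} \<rightarrow>\<^sub>E {..<K}"]) (auto simp: labelings_def intro: finite_PiE)

lemma card_labelings_le: "card (labelings n K) \<le> K ^ n"
proof -
  have "card (labelings n K) \<le> card ({..<n} \<rightarrow>\<^sub>E {..<K})"
    by (rule card_mono) (auto simp: labelings_def intro: finite_PiE)
  thus ?thesis by (simp add: card_PiE)
qed

lemma sum_comm_partition:
  assumes "z \<in> labelings n K"
  shows "(\<Sum>k<K. \<Sum>i\<in>comm n z k. h k i) = (\<Sum>i<n. h (z i) i)"
proof -
  have "(\<Sum>i<n. h (z i) i) = (\<Sum>k<K. \<Sum>i\<in>{i\<in>{..<n}. z i = k}. h (z i) i)"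
    by (rule sum.group[symmetric]) (use labelings_range[OF assms] in auto)
  thus ?thesis unfolding comm_def by simp
qed

lemma sum_comm_partition2:
  assumes "z \<in> labelings n K"
  shows "(\<Sum>k<K. \<Sum>l<K. \<Sum>i\<in>comm n z k. \<Sum>j\<in>comm n z l. f k l i j) = (\<Sum>i<n. \<Sum>j<n. f (z i) (z j) i j)"
proof -
  have "(\<Sum>k<K. \<Sum>l<K. \<Sum>i\<in>comm n z k. \<Sum>j\<in>comm n z l. f k l i j) =
        (\<Sum>k<K. \<Sum>i\<in>comm n z k. \<Sum>l<K. \<Sum>j\<in>comm n z l. f k l i j)"
    by (intro sum.cong refl sum.swap)
  also have "\<dots> = (\<Sum>i<n. \<Sum>l<K. \<Sum>j\<in>comm n z l. f (z i) l i j)"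
    by (rule sum_comm_partition[OF assms])
  also have "\<dots> = (\<Sum>i<n. \<Sum>j<n. f (z i) (z j) i j)"
    by (simp add: sum_comm_partition[OF assms])
  finally show ?thesis .
qed

lemma sum_frob2_comm_blocks:
  assumes "z \<in> labelings n K"
  shows "(\<Sum>k<K. \<Sum>l<K. frob2 (comm n z k) (comm n z l) M) = frob2 {..<n} {..<n} M"
  unfolding frob2_def using sum_comm_partition2[OF assms, of "\<lambda>k l i j. (M i j)\<^sup>2"] by simp

lemma sum_card_comm:
  assumes "z \<in> labelings n K"
  shows "(\<Sum>k<K. card (comm n z k)) = n"
  using sum_comm_partition[OF assms, of "\<lambda>k i. (1::nat)"] by simp

lemma card_comm_pos:
  assumes "z \<in> labelings n K" "k < K"
  shows "card (comm n z k) \<ge> 1"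
  using assms finite_comm unfolding labelings_def by (simp add: Suc_le_eq card_gt_0_iff)

lemma labelings_nodes_pos:
  assumes "z \<in> labelings n K" "K \<ge> 1"
  shows "n \<ge> 1"
  using card_comm_pos[OF assms(1), of 0] card_mono[OF _ comm_subset, of n z 0] assms(2) by simp

lemma sum_card_le_nodes_times:
  assumes "z \<in> labelings n K" "\<And>k l. k < K \<Longrightarrow> l < K \<Longrightarrow> S k l \<subseteq> comm n z k"
  shows "(\<Sum>k<K. \<Sum>l<K. card (S k l)) \<le> n * K"
proof -
  have "(\<Sum>k<K. \<Sum>l<K. card (S k l)) \<le> (\<Sum>k<K. \<Sum>l<K. card (comm n z k))"
    using assms(2) finite_comm by (intro sum_mono card_mono) auto
  also have "\<dots> = n * K" using sum_card_comm[OF assms(1)] by (simp add: sum_distrib_left[symmetric] mult.commute)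
  finally show ?thesis .
qed

lemma sum_lessThan_Times:
  "(\<Sum>p\<in>{..<K} \<times> {..<K}. f p) = (\<Sum>k<K. \<Sum>l<K. f (k, l))"
  by (simp add: sum.cartesian_product)

section \<open>Concentration of the noise\<close>

definition noise :: "nat \<Rightarrow> (nat \<Rightarrow> nat \<Rightarrow> real) \<Rightarrow> (nat \<times> nat \<Rightarrow> bool) \<Rightarrow> nat \<Rightarrow> nat \<Rightarrow> real" where
  "noise n P \<omega> = (\<lambda>i j. adj n \<omega> i j - P i j)"

lemma prob_inner_noise_lower_tail:
  assumes sym: "\<forall>i<n. \<forall>j<n. P i j = P j i" and P01: "\<forall>i<n. \<forall>j<n. 0 \<le> P i j \<and> P i j \<le> 1"
    and t: "t > 0"
  shows "measure_pmf.prob (edge_pmf n P)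
     {\<omega>. (\<Sum>i<n. \<Sum>j<n. P i j * noise n P \<omega> i j) < - sqrt (frob2 {..<n} {..<n} P * t)} \<le> exp (- t)"
proof (cases "frob2 {..<n} {..<n} P = 0")
  case True
  hence "\<forall>i<n. \<forall>j<n. P i j = 0" unfolding frob2_def by (simp add: sum_nonneg_eq_0_iff sum_nonneg)
  thus ?thesis using True by simp
next
  case False
  define F where "F = frob2 {..<n} {..<n} P"
  have F: "F > 0" using False frob2_nonneg[of "{..<n}" "{..<n}" P] unfolding F_def by simp
  have "{\<omega>. (\<Sum>i<n. \<Sum>j<n. P i j * noise n P \<omega> i j) < - sqrt (F * t)}
      \<subseteq> {\<omega>. sqrt (F * t) \<le> (\<Sum>i<n. \<Sum>j<n. - P i j * (adj n \<omega> i j - P i j))}"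
    by (auto simp: noise_def sum_negf)
  hence "measure_pmf.prob (edge_pmf n P)
      {\<omega>. (\<Sum>i<n. \<Sum>j<n. P i j * noise n P \<omega> i j) < - sqrt (F * t)}
      \<le> measure_pmf.prob (edge_pmf n P) {\<omega>. sqrt (F * t) \<le> (\<Sum>i<n. \<Sum>j<n. - P i j * (adj n \<omega> i j - P i j))}"
    by (rule measure_pmf.finite_measure_mono) simp
  also have "\<dots> \<le> exp (- (sqrt (F * t))\<^sup>2 / F)"
    using F t by (intro prob_weighted_centered_adj_ge[OF sym P01]) (auto simp: F_def frob2_def)
  also have "\<dots> = exp (- t)" using F t by simp
  finally show ?thesis unfolding F_def .
qed

text \<open>For a labelling \<open>z\<close>, the rows of the block \<open>(k, l)\<close> on which \<open>P\<close> does not vanish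
  identically; their total number is \<open>|breve J_*(z)|\<close>.\<close>

definition supp_rows :: "nat \<Rightarrow> (nat \<Rightarrow> nat \<Rightarrow> real) \<Rightarrow> (nat \<Rightarrow> nat) \<Rightarrow> nat \<times> nat \<Rightarrow> nat set" where
  "supp_rows n P z p = {i \<in> comm n z (fst p). \<exists>j \<in> comm n z (snd p). P i j \<noteq> 0}"

definition supp_cols :: "nat \<Rightarrow> (nat \<Rightarrow> nat \<Rightarrow> real) \<Rightarrow> (nat \<Rightarrow> nat) \<Rightarrow> nat \<times> nat \<Rightarrow> nat set" where
  "supp_cols n P z p = supp_rows n P z (snd p, fst p)"

definition label_net where
  "label_net n K P z = block_net ({..<K} \<times> {..<K}) (supp_rows n P z) (supp_cols n P z)"

definition label_form where
  "label_form n K z = block_form ({..<K} \<times> {..<K}) (\<lambda>p. comm n z (fst p)) (\<lambda>p. comm n z (snd p))"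

lemma block_support_labelling:
  assumes sym: "\<forall>i<n. \<forall>j<n. P i j = P j i"
    and E: "\<And>i j. i < n \<Longrightarrow> j < n \<Longrightarrow> E i j \<noteq> 0 \<Longrightarrow> P i j \<noteq> 0"
  shows "block_support ({..<K} \<times> {..<K}) (\<lambda>p. comm n z (fst p)) (\<lambda>p. comm n z (snd p))
           (supp_rows n P z) (supp_cols n P z) E"
proof
  fix p i j assume "i \<in> comm n z (fst p)" "j \<in> comm n z (snd p)" "E i j \<noteq> 0"
  moreover from this have "i < n" "j < n" using comm_subset by auto
  ultimately show "i \<in> supp_rows n P z p \<and> j \<in> supp_cols n P z p"
    using E sym unfolding supp_rows_def supp_cols_def by fastforce
qed (auto simp: finite_comm supp_rows_def supp_cols_def)

lemma card_label_net:
  "finite (label_net n K P z) \<and> card (label_net n K P z) \<le> 2^(30 * breve_card n K P z)"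
proof -
  have rows: "(\<Sum>p\<in>{..<K} \<times> {..<K}. card (supp_rows n P z p)) = breve_card n K P z"
    unfolding sum_lessThan_Times breve_card_def supp_rows_def by simp
  have "(\<Sum>p\<in>{..<K} \<times> {..<K}. card (supp_cols n P z p)) = (\<Sum>k<K. \<Sum>l<K. card (supp_rows n P z (l, k)))"
    unfolding sum_lessThan_Times supp_cols_def by simp
  also have "\<dots> = breve_card n K P z"
    unfolding breve_card_def supp_rows_def by (subst sum.swap) simp
  finally have cols: "(\<Sum>p\<in>{..<K} \<times> {..<K}. card (supp_cols n P z p)) = breve_card n K P z" .
  have "finite (supp_rows n P z p)" "finite (supp_cols n P z p)" for p
    by (auto simp: supp_rows_def supp_cols_def finite_comm)
  thus ?thesis
    using card_block_net[of "{..<K} \<times> {..<K}" "supp_rows n P z" "supp_cols n P z"]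
    unfolding label_net_def rows cols by simp
qed

definition block_weights ::
    "(nat \<Rightarrow> nat) \<Rightarrow> (nat \<times> nat \<Rightarrow> nat \<Rightarrow> real) \<Rightarrow> (nat \<times> nat \<Rightarrow> nat \<Rightarrow> real) \<Rightarrow> (nat \<times> nat \<Rightarrow> real)
      \<Rightarrow> nat \<Rightarrow> nat \<Rightarrow> real" where
  "block_weights z U V X i j = X (z i, z j) * U (z i, z j) i * V (z i, z j) j"

lemma label_form_eq_inner:
  assumes "z \<in> labelings n K"
  shows "label_form n K z E U V X = (\<Sum>i<n. \<Sum>j<n. block_weights z U V X i j * E i j)"
proof -
  have "label_form n K z E U V X =
      (\<Sum>k<K. \<Sum>l<K. \<Sum>i\<in>comm n z k. \<Sum>j\<in>comm n z l. X (k, l) * U (k, l) i * V (k, l) j * E i j)"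
    unfolding label_form_def block_form_def mat_vec_def sum_lessThan_Times
    by (simp add: sum_distrib_left algebra_simps)
  also have "\<dots> = (\<Sum>i<n. \<Sum>j<n. block_weights z U V X i j * E i j)"
    unfolding block_weights_def by (rule sum_comm_partition2[OF assms])
  finally show ?thesis .
qed

lemma sum_sq_block_weights_le:
  assumes z: "z \<in> labelings n K" and UVX: "(U, V, X) \<in> label_net n K P z"
  shows "(\<Sum>i<n. \<Sum>j<n. (block_weights z U V X i j)\<^sup>2) \<le> 1"
proof -
  have U: "U (k, l) \<in> grid_net (supp_rows n P z (k, l))"
    and V: "V (k, l) \<in> grid_net (supp_cols n P z (k, l))" if "k < K" "l < K" for k l
    using UVX that unfolding label_net_def block_net_def by auto
  have X: "X \<in> grid_net (active_blocks ({..<K} \<times> {..<K}) (supp_rows n P z))"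
    using UVX unfolding label_net_def block_net_def by auto
  have nU: "sq_norm (comm n z k) (U (k, l)) \<le> 1" if "k < K" "l < K" for k l
    using grid_net_sq_norm_le[OF U[OF that]] grid_net_vanishes[OF U[OF that]] finite_comm
      sq_norm_cong_support[of "supp_rows n P z (k, l)" "comm n z k" "U (k, l)"]
    by (auto simp: supp_rows_def)
  have nV: "sq_norm (comm n z l) (V (k, l)) \<le> 1" if "k < K" "l < K" for k l
    using grid_net_sq_norm_le[OF V[OF that]] grid_net_vanishes[OF V[OF that]] finite_comm
      sq_norm_cong_support[of "supp_cols n P z (k, l)" "comm n z l" "V (k, l)"]
    by (auto simp: supp_cols_def supp_rows_def)
  have "sq_norm ({..<K} \<times> {..<K}) X = sq_norm (active_blocks ({..<K} \<times> {..<K}) (supp_rows n P z)) X"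
    using grid_net_vanishes[OF X] by (intro sq_norm_cong_support) (auto simp: active_blocks_def)
  hence nX: "sq_norm ({..<K} \<times> {..<K}) X \<le> 1" using grid_net_sq_norm_le[OF X] by simp
  have "(\<Sum>i<n. \<Sum>j<n. (block_weights z U V X i j)\<^sup>2) =
      (\<Sum>k<K. \<Sum>l<K. \<Sum>i\<in>comm n z k. \<Sum>j\<in>comm n z l. (X (k, l) * U (k, l) i * V (k, l) j)\<^sup>2)"
    unfolding block_weights_def by (rule sum_comm_partition2[OF z, symmetric])
  also have "\<dots> = (\<Sum>k<K. \<Sum>l<K. (X (k, l))\<^sup>2 * sq_norm (comm n z k) (U (k, l)) * sq_norm (comm n z l) (V (k, l)))"
    unfolding sq_norm_def by (simp add: sum_distrib_left sum_distrib_right power_mult_distrib algebra_simps)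
  also have "\<dots> \<le> (\<Sum>k<K. \<Sum>l<K. (X (k, l))\<^sup>2 * 1 * 1)"
    using nU nV by (intro sum_mono mult_mono) auto
  also have "\<dots> = sq_norm ({..<K} \<times> {..<K}) X" unfolding sq_norm_def sum_lessThan_Times by simp
  finally show ?thesis using nX by simp
qed

text \<open>The threshold absorbs a union bound over the at most \<open>K\<^sup>n\<close> labellings and the at most
  \<open>2\<^sup>3\<^sup>0\<^sup>b\<close> net points of each of them.\<close>

definition net_threshold :: "nat \<Rightarrow> nat \<Rightarrow> (nat \<Rightarrow> nat \<Rightarrow> real) \<Rightarrow> real \<Rightarrow> (nat \<Rightarrow> nat) \<Rightarrow> real" where
  "net_threshold n K P t z = sqrt (30 * real (breve_card n K P z) * ln 2 + real n * ln (real K) + t)"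

lemma net_threshold_sq:
  "K \<ge> 1 \<Longrightarrow> t > 0 \<Longrightarrow>
    (net_threshold n K P t z)\<^sup>2 = 30 * real (breve_card n K P z) * ln 2 + real n * ln (real K) + t"
  unfolding net_threshold_def by (intro real_sqrt_pow2) auto

lemma prob_label_form_large_at:
  assumes z: "z \<in> labelings n K" and K: "K \<ge> 1" and t: "t > 0"
    and sym: "\<forall>i<n. \<forall>j<n. P i j = P j i" and P01: "\<forall>i<n. \<forall>j<n. 0 \<le> P i j \<and> P i j \<le> 1"
  shows "measure_pmf.prob (edge_pmf n P) (\<Union>(U, V, X)\<in>label_net n K P z.
       {\<omega>. net_threshold n K P t z \<le> label_form n K z (noise n P \<omega>) U V X})
     \<le> exp (- real n * ln (real K) - t)"
proof -
  let ?pr = "measure_pmf.prob (edge_pmf n P)"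
  let ?A = "\<lambda>(U, V, X). {\<omega>. net_threshold n K P t z \<le> label_form n K z (noise n P \<omega>) U V X}"
  define b where "b = breve_card n K P z"
  have single: "?pr (?A T) \<le> exp (- (net_threshold n K P t z)\<^sup>2)" if T: "T \<in> label_net n K P z" for T
  proof -
    obtain U V X where UVX: "T = (U, V, X)" by (cases T)
    have "net_threshold n K P t z > 0" unfolding net_threshold_def using K t by (auto intro!: add_nonneg_pos)
    thus ?thesis
      using prob_weighted_centered_adj_ge[OF sym P01, of _ "block_weights z U V X" 1]
        sum_sq_block_weights_le[OF z T[unfolded UVX]]
      unfolding UVX label_form_eq_inner[OF z] noise_def by simp
  qed
  have "?pr (\<Union>T\<in>label_net n K P z. ?A T) \<le> (\<Sum>T\<in>label_net n K P z. ?pr (?A T))"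
    using card_label_net by (intro measure_UNION_le) auto
  also have "\<dots> \<le> real (card (label_net n K P z)) * exp (- (net_threshold n K P t z)\<^sup>2)"
    using single by (rule sum_bounded_above)
  also have "\<dots> \<le> 2^(30 * b) * exp (- (net_threshold n K P t z)\<^sup>2)"
  proof -
    have "real (card (label_net n K P z)) \<le> real ((2::nat)^(30 * b))"
      using card_label_net[of n K P z] unfolding b_def by (simp only: of_nat_le_iff)
    thus ?thesis by (intro mult_right_mono) simp_all
  qed
  also have "(2::real)^(30 * b) = exp (real (30 * b) * ln 2)"
    by (subst exp_of_nat_mult) simp
  also have "exp (real (30 * b) * ln 2) * exp (- (net_threshold n K P t z)\<^sup>2) = exp (- real n * ln (real K) - t)"
    unfolding net_threshold_sq[OF K t] b_def by (simp add: exp_add[symmetric] algebra_simps)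
  finally show ?thesis .
qed

lemma prob_label_form_large:
  assumes K: "K \<ge> 1" and t: "t > 0"
    and sym: "\<forall>i<n. \<forall>j<n. P i j = P j i" and P01: "\<forall>i<n. \<forall>j<n. 0 \<le> P i j \<and> P i j \<le> 1"
  shows "measure_pmf.prob (edge_pmf n P)
    (\<Union>z\<in>labelings n K. \<Union>(U, V, X)\<in>label_net n K P z.
       {\<omega>. net_threshold n K P t z \<le> label_form n K z (noise n P \<omega>) U V X}) \<le> exp (- t)"
proof -
  let ?pr = "measure_pmf.prob (edge_pmf n P)"
  let ?A = "\<lambda>z. \<Union>(U, V, X)\<in>label_net n K P z.
       {\<omega>. net_threshold n K P t z \<le> label_form n K z (noise n P \<omega>) U V X}"
  have "?pr (\<Union>z\<in>labelings n K. ?A z) \<le> (\<Sum>z\<in>labelings n K. ?pr (?A z))"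
    by (rule measure_UNION_le[OF finite_labelings]) simp
  also have "\<dots> \<le> real (card (labelings n K)) * exp (- real n * ln (real K) - t)"
    using prob_label_form_large_at[OF _ K t sym P01] by (rule sum_bounded_above)
  also have "\<dots> \<le> real (K ^ n) * exp (- real n * ln (real K) - t)"
    using card_labelings_le[of n K] by (intro mult_right_mono) (simp_all only: of_nat_le_iff exp_ge_zero)
  also have "real (K ^ n) = exp (real n * ln (real K))"
    using K by (subst exp_of_nat_mult) simp
  also have "exp (real n * ln (real K)) * exp (- real n * ln (real K) - t) = exp (- t)"
    by (simp add: exp_add[symmetric])
  finally show ?thesis .
qed

lemma sum_sq_opnorm_noise_le:
  assumes z: "z \<in> labelings n K" and K: "K \<ge> 1" and t: "t > 0"
    and \<omega>: "\<omega> \<in> set_pmf (edge_pmf n P)" and sym: "\<forall>i<n. \<forall>j<n. P i j = P j i"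
    and small: "\<forall>(U, V, X)\<in>label_net n K P z. label_form n K z (noise n P \<omega>) U V X < net_threshold n K P t z"
  shows "(\<Sum>k<K. \<Sum>l<K. (opnorm (comm n z k) (comm n z l) (noise n P \<omega>))\<^sup>2)
           \<le> 480 * (real (breve_card n K P z) + real n * ln (real K) + t)"
proof -
  interpret block_support "{..<K} \<times> {..<K}" "\<lambda>p. comm n z (fst p)" "\<lambda>p. comm n z (snd p)"
    "supp_rows n P z" "supp_cols n P z" "noise n P \<omega>"
    using adj_eq_0_if_P_eq_0[OF \<omega> _ sym] by (intro block_support_labelling[OF sym]) (auto simp: noise_def)
  have "\<forall>(U, V, X)\<in>block_net ({..<K} \<times> {..<K}) (supp_rows n P z) (supp_cols n P z).
      form U V X \<le> net_threshold n K P t z"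
    using small unfolding label_net_def label_form_def by fastforce
  hence "(\<Sum>k<K. \<Sum>l<K. (opnorm (comm n z k) (comm n z l) (noise n P \<omega>))\<^sup>2) \<le> 16 * (net_threshold n K P t z)\<^sup>2"
    using sum_sq_opnorm_le_net_max unfolding sum_lessThan_Times by simp
  also have "\<dots> \<le> 480 * (real (breve_card n K P z) + real n * ln (real K) + t)"
  proof -
    define b where "b = real (breve_card n K P z)"
    define L where "L = real n * ln (real K)"
    have "16 * (30 * b * ln 2 + L + t) = 480 * (b * ln 2) + 16 * L + 16 * t"
      by (simp add: algebra_simps)
    also have "\<dots> \<le> 480 * b + 480 * L + 480 * t"
      using ln_2_less_1 K t unfolding b_def L_def by (intro add_mono) (auto simp: mult_left_le)
    finally show ?thesis unfolding net_threshold_sq[OF K t] b_def[symmetric] L_def[symmetric]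
      by (simp add: algebra_simps)
  qed
  finally show ?thesis .
qed

lemma sq_le_weighted_split:
  fixes y u v a :: real
  assumes "0 \<le> y" "y \<le> u + v" "0 \<le> u" "0 \<le> v" "a > 0"
  shows "y\<^sup>2 \<le> (1 + a) * u\<^sup>2 + (1 + 1/a) * v\<^sup>2"
proof -
  have "y\<^sup>2 \<le> (u + v)\<^sup>2" using assms by (intro power_mono) auto
  also have "\<dots> = u\<^sup>2 + v\<^sup>2 + 2 * u * v" by (simp add: power2_eq_square algebra_simps)
  also have "2 * u * v \<le> a * u\<^sup>2 + v\<^sup>2 / a"
  proof -
    have "0 \<le> (a * u - v)\<^sup>2 / a" using assms by simp
    also have "(a * u - v)\<^sup>2 / a = a * u\<^sup>2 + v\<^sup>2 / a - 2 * u * v"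
      using assms by (simp add: power2_eq_square field_simps)
    finally show ?thesis by simp
  qed
  finally show ?thesis by (simp add: algebra_simps add_divide_distrib)
qed

lemma sqrt_mult_le_weighted:
  fixes x y c :: real
  assumes "x \<ge> 0" "y \<ge> 0" "c > 0"
  shows "sqrt (x * y) \<le> c * x + y / (4 * c)"
proof -
  have "x * y \<le> (c * x + y / (4 * c))\<^sup>2"
    using assms zero_le_power2[of "c * x - y / (4 * c)"]
    by (simp add: power2_eq_square field_simps)
  hence "sqrt (x * y) \<le> sqrt ((c * x + y / (4 * c))\<^sup>2)" by (rule real_sqrt_le_mono)
  thus ?thesis using assms by simp
qed

lemma ln_le_mult_ln: "n \<ge> 1 \<Longrightarrow> K \<ge> 2 \<Longrightarrow> ln (real n) \<le> real n * ln (real K)"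
proof -
  assume n: "n \<ge> 1" and K: "K \<ge> 2"
  have "real n < 2 ^ n" using less_exp[of n] by (simp flip: of_nat_less_iff)
  hence "ln (real n) \<le> ln (2 ^ n)" using n by (subst ln_le_cancel_iff) auto
  also have "\<dots> = real n * ln 2" by (simp add: ln_realpow)
  also have "\<dots> \<le> real n * ln (real K)" using K by (intro mult_left_mono) auto
  finally show ?thesis .
qed

lemma xlog_ge_self: "real x \<le> c \<Longrightarrow> real x \<le> real x * ln (c * exp 1 / real x)"
proof (cases "x = 0")
  case False
  assume c: "real x \<le> c"
  have pos: "real x > 0" using False by simp
  hence "exp 1 \<le> c * exp 1 / real x" using c by (simp add: field_simps)
  moreover have "0 < exp (1::real)" by simp
  ultimately have "ln (exp 1) \<le> ln (c * exp 1 / real x)"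
    using ln_le_cancel_iff[of "exp 1" "c * exp 1 / real x"] by linarith
  thus ?thesis using pos by (simp add: mult_le_cancel_left1)
qed simp

lemma xlog_nonneg: "real x \<le> c \<Longrightarrow> 0 \<le> real x * ln (c * exp 1 / real x)"
  using xlog_ge_self[of x c] by linarith

lemma xlog_mono:
  fixes x y c :: real
  assumes "0 < x" "x \<le> y" "y * exp 1 \<le> c"
  shows "x * ln (c / x) \<le> y * ln (c / y)"
proof -
  have yp: "y > 0" using assms by simp
  have "0 < y * exp 1" using yp by simp
  hence cp: "c > 0" using assms by linarith
  have "x * ln (c / x) = x * ln (c / y) + x * ln (y / x)"
    using yp cp assms(1) by (simp add: ln_div algebra_simps)
  also have "x * ln (y / x) \<le> x * (y / x - 1)"
    using assms yp by (intro mult_left_mono ln_le_minus_one) auto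
  also have "x * (y / x - 1) = y - x" using assms by (simp add: field_simps)
  also have "y - x \<le> (y - x) * ln (c / y)"
  proof -
    have "exp 1 \<le> c / y" using assms yp by (simp add: field_simps)
    hence "ln (exp 1) \<le> ln (c / y)" using yp cp by (subst ln_le_cancel_iff) auto
    thus ?thesis using assms by (simp add: mult_le_cancel_left1)
  qed
  finally show ?thesis by (simp add: algebra_simps)
qed

text \<open>The log-sum inequality, in the form \<open>\<Sum> x ln (a e / x) \<le> X ln (A e / X)\<close>, from
  \<open>ln t \<le> t - 1\<close> applied to \<open>t = a X / (x A)\<close>.\<close>

lemma sum_xlog_le:
  fixes x :: "'a \<Rightarrow> nat" and a :: "'a \<Rightarrow> real"
  assumes fin: "finite S" and xa: "\<And>p. p \<in> S \<Longrightarrow> real (x p) \<le> a p" and a0: "\<And>p. p \<in> S \<Longrightarrow> 0 < a p"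
  shows "(\<Sum>p\<in>S. real (x p) * ln (a p * exp 1 / real (x p))) \<le>
         real (\<Sum>p\<in>S. x p) * ln ((\<Sum>p\<in>S. a p) * exp 1 / real (\<Sum>p\<in>S. x p))"
proof (cases "(\<Sum>p\<in>S. x p) = 0")
  case True
  thus ?thesis using fin by simp
next
  case False
  define X where "X = real (\<Sum>p\<in>S. x p)"
  define A where "A = (\<Sum>p\<in>S. a p)"
  have Xs: "X = (\<Sum>p\<in>S. real (x p))" unfolding X_def by simp
  have Xp: "X > 0" using False unfolding X_def by (simp only: of_nat_0_less_iff)
  have Ap: "A > 0" using Xp xa unfolding Xs A_def by (meson order_less_le_trans sum_mono)
  have summand: "real (x p) * ln (a p * exp 1 / real (x p)) \<le> real (x p) * ln (A * exp 1 / X) + (a p * X / A - real (x p))"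
    if p: "p \<in> S" for p
  proof (cases "x p = 0")
    case False
    hence xp: "real (x p) > 0" by simp
    have "ln (a p * exp 1 / real (x p)) = ln (A * exp 1 / X) + ln (a p * X / (real (x p) * A))"
      using xp Xp Ap a0[OF p] by (simp add: ln_mult ln_div)
    moreover have "ln (a p * X / (real (x p) * A)) \<le> a p * X / (real (x p) * A) - 1"
      using xp Xp Ap a0[OF p] by (intro ln_le_minus_one) simp
    ultimately have "real (x p) * ln (a p * exp 1 / real (x p)) \<le>
        real (x p) * ln (A * exp 1 / X) + real (x p) * (a p * X / (real (x p) * A) - 1)"
      using xp by (simp add: distrib_left)
    also have "real (x p) * (a p * X / (real (x p) * A) - 1) = a p * X / A - real (x p)"
      using xp Ap by (simp add: field_simps)
    finally show ?thesis .
  qed (use a0[OF p] Xp Ap in simp)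
  have "(\<Sum>p\<in>S. real (x p) * ln (a p * exp 1 / real (x p))) \<le>
      (\<Sum>p\<in>S. real (x p) * ln (A * exp 1 / X) + (a p * X / A - real (x p)))"
    by (intro sum_mono summand)
  also have "\<dots> = X * ln (A * exp 1 / X) + (A * X / A - X)"
    unfolding Xs A_def by (simp add: sum.distrib sum_subtractf sum_distrib_right sum_divide_distrib)
  also have "\<dots> = X * ln (A * exp 1 / X)" using Ap by simp
  finally show ?thesis unfolding X_def A_def .
qed

lemma sum_ln_le_ln_mean:
  fixes m :: "nat \<Rightarrow> nat"
  assumes "K > 0" "\<And>k. k < K \<Longrightarrow> m k \<ge> 1"
  shows "(\<Sum>k<K. ln (real (m k))) \<le> real K * ln (real (\<Sum>k<K. m k) / real K)"
proof -
  define N where "N = real (\<Sum>k<K. m k)"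
  have "m 0 \<le> (\<Sum>k<K. m k)" using assms(1) by (intro member_le_sum) auto
  hence Np: "N > 0" unfolding N_def using assms(2)[of 0] assms(1) by linarith
  have mk: "real (m k) > 0" if "k < K" for k using assms(2)[OF that] by simp
  have "(\<Sum>k<K. ln (real (m k)) - ln (N / real K)) = (\<Sum>k<K. ln (real (m k) * real K / N))"
    using mk Np assms(1) by (intro sum.cong) (auto simp: ln_div ln_mult)
  also have "\<dots> \<le> (\<Sum>k<K. real (m k) * real K / N - 1)"
    using mk Np assms(1) by (intro sum_mono ln_le_minus_one) auto
  also have "\<dots> = 0"
    using Np assms(1) unfolding sum_subtractf N_def
    by (simp add: sum_divide_distrib[symmetric] sum_distrib_right[symmetric])
  finally show ?thesis unfolding N_def sum_subtractf by simp
qed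

definition penalty :: "real \<Rightarrow> real \<Rightarrow> bool \<Rightarrow> nat \<Rightarrow> nat \<Rightarrow> (nat \<Rightarrow> nat) \<Rightarrow> (nat \<Rightarrow> nat \<Rightarrow> nat set) \<Rightarrow> real" where
  "penalty \<beta>1 \<beta>2 sp n K z J = (if sp then pen_s \<beta>1 \<beta>2 n K z J else pen_ns \<beta>1 \<beta>2 n K J)"

definition pen_base :: "real \<Rightarrow> nat \<Rightarrow> nat \<Rightarrow> real" where
  "pen_base \<beta>2 n K = \<beta>2 * (real n * ln (real K) + ln (real n))"

lemma penalty_ge_base:
  assumes z: "z \<in> labelings n K" and K: "K \<ge> 1" and J: "is_sparsity_family n K z J"
    and \<beta>: "\<beta>1 > 0" "\<beta>2 > 0"
  shows "pen_base \<beta>2 n K \<le> penalty \<beta>1 \<beta>2 sp n K z J"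
proof -
  have J_sub: "\<And>k l. k < K \<Longrightarrow> l < K \<Longrightarrow> J k l \<subseteq> comm n z k"
    using J unfolding is_sparsity_family_def by blast
  have "0 \<le> (\<Sum>k<K. \<Sum>l<K. real (card (J k l)) * ln (real (card (comm n z k)) * exp 1 / real (card (J k l))))"
    using J_sub card_mono[OF finite_comm] by (intro sum_nonneg xlog_nonneg) auto
  moreover have "0 \<le> (\<Sum>k<K. ln (real (card (comm n z k))))"
    using card_comm_pos[OF z] by (intro sum_nonneg) simp
  moreover have "card_fam K J \<le> n * K"
    unfolding card_fam_def by (rule sum_card_le_nodes_times[OF z, of J]) (rule J_sub)
  hence "0 \<le> real (card_fam K J) * ln (real n * real K * exp 1 / real (card_fam K J))"
    by (intro xlog_nonneg) (simp flip: of_nat_mult)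
  moreover have "0 \<le> ln (real n)" using labelings_nodes_pos[OF z K] by simp
  ultimately show ?thesis using \<beta>
    unfolding penalty_def pen_s_def pen_ns_def pen_base_def by (simp add: mult.assoc)
qed

definition true_support :: "nat \<Rightarrow> (nat \<Rightarrow> nat) \<Rightarrow> (nat \<Rightarrow> nat \<Rightarrow> real) \<Rightarrow> nat \<Rightarrow> nat \<Rightarrow> nat set" where
  "true_support n zs \<Lambda> k l = {i \<in> comm n zs k. \<Lambda> i l \<noteq> 0}"

lemma true_support_sparsity_family: "is_sparsity_family n K zs (true_support n zs \<Lambda>)"
  unfolding is_sparsity_family_def true_support_def by auto

lemma card_fam_true_support: "card_fam K (true_support n zs \<Lambda>) = Jstar_card n K zs \<Lambda>"
  unfolding card_fam_def Jstar_card_def true_support_def ..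

text \<open>Under Assumption A1 no column \<open>\<Lambda>\<^sup>(\<^sup>k\<^sup>,\<^sup>l\<^sup>)\<close> vanishes, so every block of the true support
  is nonempty.\<close>

lemma true_support_nonempty:
  assumes A1: "\<forall>k<K. \<forall>c::nat \<Rightarrow> real. (\<forall>i \<in> comm n zs k. (\<Sum>l<K. c l * \<Lambda> i l) = 0) \<longrightarrow> (\<forall>l<K. c l = 0)"
    and kl: "k < K" "l < K"
  shows "true_support n zs \<Lambda> k l \<noteq> {}"
proof
  assume empty: "true_support n zs \<Lambda> k l = {}"
  define c where "c l' = (if l' = l then 1 else 0 :: real)" for l'
  have "(\<Sum>l'<K. c l' * \<Lambda> i l') = (\<Sum>l'<K. if l' = l then \<Lambda> i l' else 0)" for i
    by (intro sum.cong) (auto simp: c_def)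
  hence "(\<Sum>l'<K. c l' * \<Lambda> i l') = \<Lambda> i l" for i
    using kl by (simp add: sum.delta)
  hence "\<forall>i \<in> comm n zs k. (\<Sum>l'<K. c l' * \<Lambda> i l') = 0"
    using empty unfolding true_support_def by auto
  hence "c l = 0" using A1 kl by blast
  thus False unfolding c_def by simp
qed

lemma Jstar_card_bounds:
  assumes zs: "zs \<in> labelings n K"
    and A1: "\<forall>k<K. \<forall>c::nat \<Rightarrow> real. (\<forall>i \<in> comm n zs k. (\<Sum>l<K. c l * \<Lambda> i l) = 0) \<longrightarrow> (\<forall>l<K. c l = 0)"
  shows "K * K \<le> Jstar_card n K zs \<Lambda>" "Jstar_card n K zs \<Lambda> \<le> n * K"
proof -
  have "(\<Sum>k<K. \<Sum>l<K. (1::nat)) \<le> (\<Sum>k<K. \<Sum>l<K. card (true_support n zs \<Lambda> k l))"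
    using true_support_nonempty[OF A1] finite_comm
    by (intro sum_mono) (auto simp: Suc_le_eq card_gt_0_iff true_support_def)
  thus "K * K \<le> Jstar_card n K zs \<Lambda>"
    unfolding card_fam_true_support[symmetric] card_fam_def by simp
  show "Jstar_card n K zs \<Lambda> \<le> n * K"
    unfolding card_fam_true_support[symmetric] card_fam_def
    by (rule sum_card_le_nodes_times[OF zs]) (auto simp: true_support_def)
qed

lemma sum_xlog_true_support_le:
  assumes zs: "zs \<in> labelings n K"
  shows "(\<Sum>k<K. \<Sum>l<K. real (card (true_support n zs \<Lambda> k l))
            * ln (real (card (comm n zs k)) * exp 1 / real (card (true_support n zs \<Lambda> k l))))
         \<le> real (Jstar_card n K zs \<Lambda>) * ln (real n * real K * exp 1 / real (Jstar_card n K zs \<Lambda>))"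
proof -
  define x where "x p = card (true_support n zs \<Lambda> (fst p) (snd p))" for p :: "nat \<times> nat"
  define a where "a p = real (card (comm n zs (fst p)))" for p :: "nat \<times> nat"
  have "real (x p) \<le> a p" if "p \<in> {..<K} \<times> {..<K}" for p
    unfolding x_def a_def true_support_def by (simp add: card_mono finite_comm)
  moreover have "0 < a p" if "p \<in> {..<K} \<times> {..<K}" for p
    using card_comm_pos[OF zs, of "fst p"] that unfolding a_def by auto
  ultimately have "(\<Sum>p\<in>{..<K} \<times> {..<K}. real (x p) * ln (a p * exp 1 / real (x p))) \<le>
      real (\<Sum>p\<in>{..<K} \<times> {..<K}. x p) * ln ((\<Sum>p\<in>{..<K} \<times> {..<K}. a p) * exp 1 / real (\<Sum>p\<in>{..<K} \<times> {..<K}. x p))"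
    by (intro sum_xlog_le) auto
  also have "(\<Sum>p\<in>{..<K} \<times> {..<K}. x p) = Jstar_card n K zs \<Lambda>"
    unfolding sum_lessThan_Times x_def Jstar_card_def true_support_def by simp
  also have "(\<Sum>p\<in>{..<K} \<times> {..<K}. a p) = real n * real K"
    using sum_card_comm[OF zs] unfolding sum_lessThan_Times a_def
    by (simp add: sum_distrib_left[symmetric] flip: of_nat_sum)
  finally show ?thesis unfolding sum_lessThan_Times x_def a_def by simp
qed

lemma K_sum_ln_card_comm_le:
  assumes zs: "zs \<in> labelings n K" and K: "K \<ge> 1"
    and js: "K * K \<le> Jstar_card n K zs \<Lambda>" "Jstar_card n K zs \<Lambda> \<le> n * K"
  shows "real K * (\<Sum>k<K. ln (real (card (comm n zs k))))
         \<le> real (Jstar_card n K zs \<Lambda>) * ln (real n * real K * exp 1 / real (Jstar_card n K zs \<Lambda>))"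
proof -
  have n: "n \<ge> 1" by (rule labelings_nodes_pos[OF zs K])
  have "(\<Sum>k<K. ln (real (card (comm n zs k)))) \<le> real K * ln (real n / real K)"
    using sum_ln_le_ln_mean[of K "\<lambda>k. card (comm n zs k)"] K card_comm_pos[OF zs] sum_card_comm[OF zs]
    by simp
  hence le: "real K * (\<Sum>k<K. ln (real (card (comm n zs k)))) \<le> real (K * K) * ln (real n / real K)"
    by (simp add: mult_left_mono mult.assoc)
  show ?thesis
  proof (cases "n \<le> K")
    case True
    hence "real (K * K) * ln (real n / real K) \<le> 0" using n K by (simp add: ln_div mult_nonneg_nonpos)
    moreover have "0 \<le> real (Jstar_card n K zs \<Lambda>) * ln (real n * real K * exp 1 / real (Jstar_card n K zs \<Lambda>))"
      using js(2) by (intro xlog_nonneg) (simp flip: of_nat_mult)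
    ultimately show ?thesis using le by linarith
  next
    case False
    have "ln (real n / real K) \<le> ln (real n * real K * exp 1 / real (K * K))"
      using K n by (subst ln_le_cancel_iff) (auto simp: field_simps)
    hence "real (K * K) * ln (real n / real K) \<le> real (K * K) * ln (real n * real K * exp 1 / real (K * K))"
      by (rule mult_left_mono) simp
    also have "\<dots> \<le> real (Jstar_card n K zs \<Lambda>) * ln (real n * real K * exp 1 / real (Jstar_card n K zs \<Lambda>))"
      using js K by (intro xlog_mono) (auto simp flip: of_nat_mult)
    finally show ?thesis using le by linarith
  qed
qed

lemma penalty_true_support_le:
  assumes zs: "zs \<in> labelings n K" and K: "K \<ge> 2" and \<beta>: "\<beta>1 > 0" "\<beta>2 > 0"
    and A1: "\<forall>k<K. \<forall>c::nat \<Rightarrow> real. (\<forall>i \<in> comm n zs k. (\<Sum>l<K. c l * \<Lambda> i l) = 0) \<longrightarrow> (\<forall>l<K. c l = 0)"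
  shows "penalty \<beta>1 \<beta>2 sp n K zs (true_support n zs \<Lambda>) \<le> pen_base \<beta>2 n K
    + (\<beta>1 + \<beta>2) * (real (Jstar_card n K zs \<Lambda>) * ln (real n * real K * exp 1 / real (Jstar_card n K zs \<Lambda>)))
    + 4 * \<beta>2 * (real n * ln (real K))"
proof -
  define Lj where "Lj = real (Jstar_card n K zs \<Lambda>) * ln (real n * real K * exp 1 / real (Jstar_card n K zs \<Lambda>))"
  have K1: "K \<ge> 1" using K by simp
  have n: "n \<ge> 1" by (rule labelings_nodes_pos[OF zs K1])
  note js = Jstar_card_bounds[OF zs A1]
  have Lj: "0 \<le> Lj" unfolding Lj_def using js(2) by (intro xlog_nonneg) (simp flip: of_nat_mult)
  have lnK: "0 \<le> real n * ln (real K)" using K by simp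
  show ?thesis
  proof (cases sp)
    case True
    have "\<beta>1 * (\<Sum>k<K. \<Sum>l<K. real (card (true_support n zs \<Lambda> k l))
            * ln (real (card (comm n zs k)) * exp 1 / real (card (true_support n zs \<Lambda> k l)))) \<le> \<beta>1 * Lj"
      using sum_xlog_true_support_le[OF zs] \<beta> unfolding Lj_def by (intro mult_left_mono) auto
    moreover have "\<beta>2 * (real K * (\<Sum>k<K. ln (real (card (comm n zs k))))) \<le> \<beta>2 * Lj"
      using K_sum_ln_card_comm_le[OF zs K1 js] \<beta> unfolding Lj_def by (intro mult_left_mono) auto
    moreover have "penalty \<beta>1 \<beta>2 sp n K zs (true_support n zs \<Lambda>) =
        \<beta>1 * (\<Sum>k<K. \<Sum>l<K. real (card (true_support n zs \<Lambda> k l))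
            * ln (real (card (comm n zs k)) * exp 1 / real (card (true_support n zs \<Lambda> k l))))
        + \<beta>2 * (real K * (\<Sum>k<K. ln (real (card (comm n zs k))))) + pen_base \<beta>2 n K"
      using True unfolding penalty_def pen_s_def pen_base_def by (simp add: mult.assoc)
    moreover have "0 \<le> 4 * \<beta>2 * (real n * ln (real K))" using \<beta> lnK by simp
    ultimately show ?thesis unfolding Lj_def[symmetric] by (simp add: distrib_right)
  next
    case False
    have "2 * \<beta>2 * ln (real n) \<le> 4 * \<beta>2 * (real n * ln (real K))"
      using ln_le_mult_ln[OF n K] lnK \<beta> by simp
    moreover have "penalty \<beta>1 \<beta>2 sp n K zs (true_support n zs \<Lambda>) =
        \<beta>1 * Lj + 2 * \<beta>2 * ln (real n) + pen_base \<beta>2 n K"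
      using False unfolding penalty_def pen_ns_def pen_base_def card_fam_true_support Lj_def
      by (simp add: mult.assoc)
    moreover have "0 \<le> \<beta>2 * Lj" using \<beta> Lj by simp
    ultimately show ?thesis unfolding Lj_def[symmetric] by (simp add: distrib_right)
  qed
qed

section \<open>The oracle inequality for the estimator\<close>

lemma crit_eq: "crit \<beta>1 \<beta>2 sp n K A z J =
    (\<Sum>k<K. \<Sum>l<K. frob2 (comm n z k) (comm n z l)
        (\<lambda>i j. A i j - best_rank1 (comm n z k) (comm n z l) (sparse_proj J k l A) i j))
    + penalty \<beta>1 \<beta>2 sp n K z J"
  unfolding crit_def penalty_def ..

lemma crit_ge:
  assumes z: "z \<in> labelings n K" and K: "K \<ge> 1" and J: "is_sparsity_family n K z J"
    and \<beta>: "\<beta>1 > 0" "\<beta>2 > 0"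
  shows "frob2 {..<n} {..<n} A - (\<Sum>k<K. \<Sum>l<K. (opnorm (comm n z k) (comm n z l) A)\<^sup>2) + pen_base \<beta>2 n K
           \<le> crit \<beta>1 \<beta>2 sp n K A z J"
proof -
  have "frob2 (comm n z k) (comm n z l) A - (opnorm (comm n z k) (comm n z l) A)\<^sup>2 \<le>
      frob2 (comm n z k) (comm n z l)
        (\<lambda>i j. A i j - best_rank1 (comm n z k) (comm n z l) (sparse_proj J k l A) i j)" for k l
    using best_rank1_spec[OF finite_comm finite_comm] by (intro frob2_minus_rank1_ge finite_comm) blast
  hence "(\<Sum>k<K. \<Sum>l<K. frob2 (comm n z k) (comm n z l) A - (opnorm (comm n z k) (comm n z l) A)\<^sup>2) \<le>
      (\<Sum>k<K. \<Sum>l<K. frob2 (comm n z k) (comm n z l)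
        (\<lambda>i j. A i j - best_rank1 (comm n z k) (comm n z l) (sparse_proj J k l A) i j))"
    by (intro sum_mono)
  thus ?thesis using penalty_ge_base[OF z K J \<beta>, of sp]
    unfolding crit_eq sum_subtractf sum_frob2_comm_blocks[OF z] by linarith
qed

text \<open>On the support of the edge distribution \<open>A\<close> vanishes wherever \<open>P\<close> does, so on the
  true blocks the sparse projection does not change \<open>A\<close>, and the rank-one matrix
  \<open>\<Lambda>\<^sup>(\<^sup>k\<^sup>,\<^sup>l\<^sup>) (\<Lambda>\<^sup>(\<^sup>l\<^sup>,\<^sup>k\<^sup>))\<^sup>T = P\<^sup>(\<^sup>k\<^sup>,\<^sup>l\<^sup>)\<close> competes in the best rank-one approximation.\<close>

lemma crit_true_support_le:
  assumes zs: "zs \<in> labelings n K" and \<omega>: "\<omega> \<in> set_pmf (edge_pmf n P)"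
    and P: "\<forall>i<n. \<forall>j<n. P i j = \<Lambda> i (zs j) * \<Lambda> j (zs i)"
  shows "crit \<beta>1 \<beta>2 sp n K (adj n \<omega>) zs (true_support n zs \<Lambda>) \<le>
     frob2 {..<n} {..<n} (noise n P \<omega>) + penalty \<beta>1 \<beta>2 sp n K zs (true_support n zs \<Lambda>)"
proof -
  define A where "A = adj n \<omega>"
  have sym: "\<forall>i<n. \<forall>j<n. P i j = P j i" using P by (simp add: mult.commute)
  have block: "frob2 (comm n zs k) (comm n zs l)
        (\<lambda>i j. A i j - best_rank1 (comm n zs k) (comm n zs l) (sparse_proj (true_support n zs \<Lambda>) k l A) i j)
      \<le> frob2 (comm n zs k) (comm n zs l) (noise n P \<omega>)" for k l
  proof -
    define I where "I = comm n zs k"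
    define J where "J = comm n zs l"
    define Y where "Y = sparse_proj (true_support n zs \<Lambda>) k l A"
    have ij: "i < n" "j < n" "zs i = k" "zs j = l" if "i \<in> I" "j \<in> J" for i j
      using that unfolding I_def J_def comm_def by auto
    have YA: "Y i j = A i j" if "i \<in> I" "j \<in> J" for i j
    proof (cases "i \<in> true_support n zs \<Lambda> k l \<and> j \<in> true_support n zs \<Lambda> l k")
      case False
      hence "P i j = 0" using P ij[OF that] that unfolding true_support_def I_def J_def by auto
      hence "A i j = 0" unfolding A_def using adj_eq_0_if_P_eq_0[OF \<omega> _ sym] by blast
      thus ?thesis using False unfolding Y_def sparse_proj_def by simp
    qed (simp add: Y_def sparse_proj_def)
    have "(\<lambda>i j. \<Lambda> i l * \<Lambda> j k) \<in> rank_le1"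
      unfolding rank_le1_def by (intro CollectI exI[of _ "\<lambda>i. \<Lambda> i l"] exI[of _ "\<lambda>j. \<Lambda> j k"]) simp
    hence "frob2 I J (\<lambda>i j. Y i j - best_rank1 I J Y i j) \<le> frob2 I J (\<lambda>i j. Y i j - \<Lambda> i l * \<Lambda> j k)"
      using best_rank1_spec[OF finite_comm finite_comm, of n zs k n zs l Y, THEN conjunct2, THEN bspec]
      unfolding I_def J_def by simp
    moreover have "frob2 I J (\<lambda>i j. A i j - best_rank1 I J Y i j) = frob2 I J (\<lambda>i j. Y i j - best_rank1 I J Y i j)"
      "frob2 I J (\<lambda>i j. Y i j - \<Lambda> i l * \<Lambda> j k) = frob2 I J (noise n P \<omega>)"
      using YA P ij unfolding noise_def A_def by (auto intro!: frob2_cong)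
    ultimately show ?thesis unfolding Y_def I_def J_def by simp
  qed
  have "(\<Sum>k<K. \<Sum>l<K. frob2 (comm n zs k) (comm n zs l)
        (\<lambda>i j. A i j - best_rank1 (comm n zs k) (comm n zs l) (sparse_proj (true_support n zs \<Lambda>) k l A) i j))
      \<le> (\<Sum>k<K. \<Sum>l<K. frob2 (comm n zs k) (comm n zs l) (noise n P \<omega>))"
    by (intro sum_mono block)
  thus ?thesis unfolding crit_eq sum_frob2_comm_blocks[OF zs] A_def by simp
qed

lemma frob2_noise_eq:
  "frob2 {..<n} {..<n} (noise n P \<omega>) = frob2 {..<n} {..<n} (adj n \<omega>) - frob2 {..<n} {..<n} P
     - 2 * (\<Sum>i<n. \<Sum>j<n. P i j * noise n P \<omega> i j)"
  unfolding frob2_def noise_def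
  by (simp add: power2_eq_square algebra_simps sum_subtractf sum.distrib sum_distrib_left)

lemma estimate_oracle_inequality:
  assumes \<beta>: "\<beta>1 > 0" "\<beta>2 > 0" and K: "K \<ge> 2" and zs: "zs \<in> labelings n K"
    and P: "\<forall>i<n. \<forall>j<n. P i j = \<Lambda> i (zs j) * \<Lambda> j (zs i)"
    and A1: "\<forall>k<K. \<forall>c::nat \<Rightarrow> real. (\<forall>i \<in> comm n zs k. (\<Sum>l<K. c l * \<Lambda> i l) = 0) \<longrightarrow> (\<forall>l<K. c l = 0)"
    and \<omega>: "\<omega> \<in> set_pmf (edge_pmf n P)"
    and est: "is_estimate \<beta>1 \<beta>2 sp n K (adj n \<omega>) z"
  shows "frob2 {..<n} {..<n} P + 2 * (\<Sum>i<n. \<Sum>j<n. P i j * noise n P \<omega> i j)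
    \<le> (\<Sum>k<K. \<Sum>l<K. (opnorm (comm n z k) (comm n z l) (adj n \<omega>))\<^sup>2)
      + (\<beta>1 + \<beta>2) * (real (Jstar_card n K zs \<Lambda>) * ln (real n * real K * exp 1 / real (Jstar_card n K zs \<Lambda>)))
      + 4 * \<beta>2 * (real n * ln (real K))"
proof -
  obtain J where z: "z \<in> labelings n K" and J: "is_sparsity_family n K z J"
    and opt: "\<And>z' J'. z' \<in> labelings n K \<Longrightarrow> is_sparsity_family n K z' J' \<Longrightarrow>
                 crit \<beta>1 \<beta>2 sp n K (adj n \<omega>) z J \<le> crit \<beta>1 \<beta>2 sp n K (adj n \<omega>) z' J'"
    using est unfolding is_estimate_def by blast
  have "frob2 {..<n} {..<n} (adj n \<omega>) - (\<Sum>k<K. \<Sum>l<K. (opnorm (comm n z k) (comm n z l) (adj n \<omega>))\<^sup>2)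
      + pen_base \<beta>2 n K \<le> crit \<beta>1 \<beta>2 sp n K (adj n \<omega>) z J"
    using K by (intro crit_ge[OF z _ J \<beta>]) simp
  also have "\<dots> \<le> crit \<beta>1 \<beta>2 sp n K (adj n \<omega>) zs (true_support n zs \<Lambda>)"
    by (rule opt[OF zs true_support_sparsity_family])
  also have "\<dots> \<le> frob2 {..<n} {..<n} (noise n P \<omega>) + penalty \<beta>1 \<beta>2 sp n K zs (true_support n zs \<Lambda>)"
    by (rule crit_true_support_le[OF zs \<omega> P])
  finally show ?thesis
    using penalty_true_support_le[OF zs K \<beta> A1, of sp] unfolding frob2_noise_eq by linarith
qed

lemma sum_sq_opnorm_add_le:
  assumes "a > 0"
  shows "(\<Sum>k<K. \<Sum>l<K. (opnorm (I k) (J l) (\<lambda>i j. M i j + E i j))\<^sup>2)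
    \<le> (1 + a) * (\<Sum>k<K. \<Sum>l<K. (opnorm (I k) (J l) M)\<^sup>2) + (1 + 1/a) * (\<Sum>k<K. \<Sum>l<K. (opnorm (I k) (J l) E)\<^sup>2)"
proof -
  have "(opnorm (I k) (J l) (\<lambda>i j. M i j + E i j))\<^sup>2 \<le>
      (1 + a) * (opnorm (I k) (J l) M)\<^sup>2 + (1 + 1/a) * (opnorm (I k) (J l) E)\<^sup>2" for k l
    using assms opnorm_add_le opnorm_nonneg by (intro sq_le_weighted_split) auto
  hence "(\<Sum>k<K. \<Sum>l<K. (opnorm (I k) (J l) (\<lambda>i j. M i j + E i j))\<^sup>2) \<le>
      (\<Sum>k<K. \<Sum>l<K. (1 + a) * (opnorm (I k) (J l) M)\<^sup>2 + (1 + 1/a) * (opnorm (I k) (J l) E)\<^sup>2)"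
    by (intro sum_mono)
  thus ?thesis by (simp add: sum.distrib sum_distrib_left)
qed

section \<open>Misclassification on the good event\<close>

text \<open>With \<open>F = \<parallel>P\<parallel>\<^sub>F\<^sup>2\<close>, \<open>S\<close> and \<open>N\<close> the sums of squared block operator norms of \<open>P\<close> and
  of the noise, \<open>ip\<close> the inner product of \<open>P\<close> and the noise, \<open>b = |breve J_*(z)|\<close>,
  \<open>js = |J_*|\<close> and \<open>L = n ln K\<close>.\<close>

lemma separation_contradiction:
  fixes F S N ip b Lb js Lj L t \<alpha> \<beta>1 \<beta>2 :: real
  assumes \<alpha>: "0 < \<alpha>" "\<alpha> < 1/2" and t: "0 < t" and \<beta>: "0 < \<beta>1" "0 < \<beta>2"
    and nonneg: "0 \<le> F" "0 \<le> S" "0 \<le> N" "0 \<le> b" "b \<le> Lb" "0 \<le> js" "0 \<le> Lj" "0 \<le> L"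
    and sep: "(1 + \<alpha>) * S + (3880 + 8 * \<beta>2) / \<alpha> * Lb + (3880 + 8 * \<beta>2) / \<alpha> * (js + L + t)
              + 2 * (\<beta>1 + \<beta>2) * Lj \<le> F"
    and inner: "- sqrt (F * t) \<le> ip"
    and noise: "N \<le> 480 * (b + L + t)"
    and fit_bound: "F + 2 * ip \<le> (1 + \<alpha> / 4) * S + (1 + 1 / (\<alpha> / 4)) * N + (\<beta>1 + \<beta>2) * Lj + 4 * \<beta>2 * L"
  shows False
proof -
  define u where "u = 1 / \<alpha>"
  have u: "u > 2" "\<alpha> * u = 1" unfolding u_def using \<alpha> by (auto simp: field_simps)
  have "sqrt (F * t) \<le> \<alpha> / 8 * F + t / (4 * (\<alpha> / 8))"
    using nonneg t \<alpha> by (intro sqrt_mult_le_weighted) auto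
  hence inner': "- (\<alpha> / 4 * F) - 4 * (u * t) \<le> 2 * ip"
    using inner unfolding u_def by (simp add: field_simps)
  have "(1 + 1 / (\<alpha> / 4)) * N \<le> 5 * u * N"
    using u nonneg unfolding u_def by (intro mult_right_mono) (auto simp: field_simps)
  also have "\<dots> \<le> 5 * u * (480 * (b + L + t))" using u noise by (intro mult_left_mono) auto
  finally have noise': "(1 + 1 / (\<alpha> / 4)) * N \<le> 2400 * (u * b) + 2400 * (u * L) + 2400 * (u * t)"
    by (simp add: algebra_simps)
  have upper: "(1 - \<alpha> / 4) * F \<le> (1 + \<alpha> / 4) * S
      + 2400 * (u * b) + 2400 * (u * L) + 2404 * (u * t) + (\<beta>1 + \<beta>2) * Lj + 4 * (\<beta>2 * L)"
    using fit_bound inner' noise' by (simp add: algebra_simps)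
  define R where "R = (3880 + 8 * \<beta>2) * (u * Lb + u * js + u * L + u * t) + 2 * (\<beta>1 + \<beta>2) * Lj"
  have R: "0 \<le> R" unfolding R_def using u nonneg \<beta> t by (auto intro!: add_nonneg_nonneg)
  have "(1 + \<alpha>) * S + R \<le> F"
    using sep unfolding R_def u_def by (simp add: algebra_simps add_divide_distrib)
  hence "(1 - \<alpha> / 4) * ((1 + \<alpha>) * S + R) \<le> (1 - \<alpha> / 4) * F" using \<alpha> by (intro mult_left_mono) auto
  moreover have "(1 + \<alpha> / 4) * S \<le> (1 - \<alpha> / 4) * (1 + \<alpha>) * S"
  proof -
    have "\<alpha> * \<alpha> \<le> 2 * \<alpha>" using \<alpha> by (intro mult_right_mono) auto
    moreover have "(1 - \<alpha> / 4) * (1 + \<alpha>) = 1 + 3 * \<alpha> / 4 - \<alpha> * \<alpha> / 4" by (simp add: field_simps)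
    ultimately have "1 + \<alpha> / 4 \<le> (1 - \<alpha> / 4) * (1 + \<alpha>)" by linarith
    thus ?thesis using nonneg by (intro mult_right_mono) auto
  qed
  moreover have "7 / 8 * R \<le> (1 - \<alpha> / 4) * R" using \<alpha> R by (intro mult_right_mono) auto
  ultimately have lower: "(1 + \<alpha> / 4) * S + 7 / 8 * R \<le> (1 - \<alpha> / 4) * F"
    by (simp add: algebra_simps)
  have "u * b \<le> u * Lb" "0 \<le> u * b" "0 \<le> u * js" "0 \<le> u * L" "0 < u * t"
    using u nonneg t by (auto intro: mult_left_mono)
  moreover have "0 \<le> \<beta>2 * (u * Lb)" "0 \<le> \<beta>2 * (u * js)" "0 \<le> \<beta>2 * (u * t)"
    "2 * (\<beta>2 * L) \<le> \<beta>2 * (u * L)" "0 \<le> \<beta>1 * Lj" "0 \<le> \<beta>2 * Lj" "0 \<le> \<beta>2 * L"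
    using u nonneg t \<beta> by (auto simp: mult_right_mono)
  ultimately show False using upper lower unfolding R_def by (simp add: algebra_simps)
qed

definition good_event :: "nat \<Rightarrow> nat \<Rightarrow> (nat \<Rightarrow> nat \<Rightarrow> real) \<Rightarrow> real \<Rightarrow> (nat \<times> nat \<Rightarrow> bool) set" where
  "good_event n K P t = {\<omega>. \<omega> \<in> set_pmf (edge_pmf n P)
     \<and> - sqrt (frob2 {..<n} {..<n} P * t) \<le> (\<Sum>i<n. \<Sum>j<n. P i j * noise n P \<omega> i j)
     \<and> (\<forall>z\<in>labelings n K. \<forall>(U, V, X)\<in>label_net n K P z.
          label_form n K z (noise n P \<omega>) U V X < net_threshold n K P t z)}"

lemma misclass_le_on_good_event:
  assumes \<beta>: "\<beta>1 > 0" "\<beta>2 > 0" and K: "K \<ge> 2" and zs: "zs \<in> labelings n K"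
    and P: "\<forall>i<n. \<forall>j<n. P i j = \<Lambda> i (zs j) * \<Lambda> j (zs i)"
    and A1: "\<forall>k<K. \<forall>c::nat \<Rightarrow> real. (\<forall>i \<in> comm n zs k. (\<Sum>l<K. c l * \<Lambda> i l) = 0) \<longrightarrow> (\<forall>l<K. c l = 0)"
    and \<alpha>: "0 < \<alpha>" "\<alpha> < 1/2" and t: "t > 0"
    and sep: "\<forall>z \<in> labelings n K. misclass n K z zs \<ge> \<delta> \<longrightarrow>
         frob2 {..<n} {..<n} P \<ge>
           (1 + \<alpha>) * (\<Sum>k<K. \<Sum>l<K. (opnorm (comm n z k) (comm n z l) P)\<^sup>2)
           + (3880 + 8 * \<beta>2) / \<alpha> * real (breve_card n K P z)
               * ln (real n * real K * exp 1 / real (breve_card n K P z))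
           + (3880 + 8 * \<beta>2) / \<alpha> * (real (Jstar_card n K zs \<Lambda>) + real n * ln (real K) + t)
           + (2 * (\<beta>1 + \<beta>2)) * real (Jstar_card n K zs \<Lambda>)
               * ln (real n * real K * exp 1 / real (Jstar_card n K zs \<Lambda>))"
    and est: "is_estimate \<beta>1 \<beta>2 sp n K (adj n \<omega>) z"
    and good: "\<omega> \<in> good_event n K P t"
  shows "misclass n K z zs \<le> \<delta>"
proof (rule ccontr)
  assume "\<not> misclass n K z zs \<le> \<delta>"
  have z: "z \<in> labelings n K" using est unfolding is_estimate_def by blast
  have K1: "K \<ge> 1" using K by simp
  have \<omega>: "\<omega> \<in> set_pmf (edge_pmf n P)" using good unfolding good_event_def by blast
  have sym: "\<forall>i<n. \<forall>j<n. P i j = P j i" using P by (simp add: mult.commute)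
  let ?opn2 = "\<lambda>M. \<Sum>k<K. \<Sum>l<K. (opnorm (comm n z k) (comm n z l) M)\<^sup>2"
  let ?b = "real (breve_card n K P z)" and ?js = "real (Jstar_card n K zs \<Lambda>)"
  have "adj n \<omega> = (\<lambda>i j. P i j + noise n P \<omega> i j)" by (simp add: noise_def)
  hence "?opn2 (adj n \<omega>) \<le> (1 + \<alpha> / 4) * ?opn2 P + (1 + 1 / (\<alpha> / 4)) * ?opn2 (noise n P \<omega>)"
    using sum_sq_opnorm_add_le[of "\<alpha> / 4"] \<alpha> by simp
  hence fit_bound: "frob2 {..<n} {..<n} P + 2 * (\<Sum>i<n. \<Sum>j<n. P i j * noise n P \<omega> i j)
      \<le> (1 + \<alpha> / 4) * ?opn2 P + (1 + 1 / (\<alpha> / 4)) * ?opn2 (noise n P \<omega>)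
        + (\<beta>1 + \<beta>2) * (?js * ln (real n * real K * exp 1 / ?js)) + 4 * \<beta>2 * (real n * ln (real K))"
    using estimate_oracle_inequality[OF \<beta> K zs P A1 \<omega> est] by linarith
  have noise: "?opn2 (noise n P \<omega>) \<le> 480 * (?b + real n * ln (real K) + t)"
    using good z unfolding good_event_def by (intro sum_sq_opnorm_noise_le[OF z K1 t \<omega> sym]) blast
  have "breve_card n K P z \<le> n * K"
    unfolding breve_card_def by (rule sum_card_le_nodes_times[OF z]) (auto simp: comm_def)
  hence b: "?b \<le> ?b * ln (real n * real K * exp 1 / ?b)"
    by (intro xlog_ge_self) (simp flip: of_nat_mult)
  have js: "0 \<le> ?js * ln (real n * real K * exp 1 / ?js)"
    using Jstar_card_bounds(2)[OF zs A1] by (intro xlog_nonneg) (simp flip: of_nat_mult)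
  have sep_z: "(1 + \<alpha>) * ?opn2 P + (3880 + 8 * \<beta>2) / \<alpha> * (?b * ln (real n * real K * exp 1 / ?b))
      + (3880 + 8 * \<beta>2) / \<alpha> * (?js + real n * ln (real K) + t)
      + 2 * (\<beta>1 + \<beta>2) * (?js * ln (real n * real K * exp 1 / ?js)) \<le> frob2 {..<n} {..<n} P"
    using sep z \<open>\<not> misclass n K z zs \<le> \<delta>\<close> by (simp add: mult.assoc)
  have inner: "- sqrt (frob2 {..<n} {..<n} P * t) \<le> (\<Sum>i<n. \<Sum>j<n. P i j * noise n P \<omega> i j)"
    using good unfolding good_event_def by blast
  show False
    by (rule separation_contradiction[OF \<alpha> t \<beta> frob2_nonneg _ _ _ b _ js _ sep_z inner noise fit_bound])
       (use K1 in \<open>auto simp: sum_nonneg\<close>)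
qed

lemma prob_good_event:
  assumes K: "K \<ge> 1" and t: "t > 0"
    and sym: "\<forall>i<n. \<forall>j<n. P i j = P j i" and P01: "\<forall>i<n. \<forall>j<n. 0 \<le> P i j \<and> P i j \<le> 1"
  shows "measure_pmf.prob (edge_pmf n P) (good_event n K P t) \<ge> 1 - 2 * exp (- t)"
proof -
  let ?pr = "measure_pmf.prob (edge_pmf n P)"
  define B1 where "B1 = {\<omega>. (\<Sum>i<n. \<Sum>j<n. P i j * noise n P \<omega> i j) < - sqrt (frob2 {..<n} {..<n} P * t)}"
  define B2 where "B2 = (\<Union>z\<in>labelings n K. \<Union>(U, V, X)\<in>label_net n K P z.
       {\<omega>. net_threshold n K P t z \<le> label_form n K z (noise n P \<omega>) U V X})"
  have "UNIV - good_event n K P t \<subseteq> (UNIV - set_pmf (edge_pmf n P)) \<union> B1 \<union> B2"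
    unfolding good_event_def B1_def B2_def by (fastforce simp: not_less)
  hence "?pr (UNIV - good_event n K P t) \<le> ?pr ((UNIV - set_pmf (edge_pmf n P)) \<union> B1 \<union> B2)"
    by (rule measure_pmf.finite_measure_mono) simp
  also have "\<dots> \<le> ?pr ((UNIV - set_pmf (edge_pmf n P)) \<union> B1) + ?pr B2"
    by (rule measure_Un_le) auto
  also have "?pr ((UNIV - set_pmf (edge_pmf n P)) \<union> B1) \<le> ?pr (UNIV - set_pmf (edge_pmf n P)) + ?pr B1"
    by (rule measure_Un_le) auto
  also have "?pr (UNIV - set_pmf (edge_pmf n P)) = 0" by (simp add: measure_pmf_zero_iff)
  also have "0 + ?pr B1 + ?pr B2 \<le> 0 + exp (- t) + exp (- t)"
    using prob_inner_noise_lower_tail[OF sym P01 t] prob_label_form_large[OF K t sym P01]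
    unfolding B1_def B2_def by (intro add_mono) auto
  finally show ?thesis using measure_pmf.prob_compl[of "good_event n K P t" "edge_pmf n P"] by simp
qed

lemma misclass_le_with_high_probability:
  fixes \<beta>1 \<beta>2 :: real
  assumes \<beta>: "\<beta>1 > 0" "\<beta>2 > 0" and K: "K \<ge> 2" and zs: "zs \<in> labelings n K"
    and \<Lambda>01: "\<forall>i<n. \<forall>l<K. 0 \<le> \<Lambda> i l \<and> \<Lambda> i l \<le> 1"
    and P: "\<forall>i<n. \<forall>j<n. P i j = \<Lambda> i (zs j) * \<Lambda> j (zs i)"
    and A1: "\<forall>k<K. \<forall>c::nat \<Rightarrow> real. (\<forall>i \<in> comm n zs k. (\<Sum>l<K. c l * \<Lambda> i l) = 0) \<longrightarrow> (\<forall>l<K. c l = 0)"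
    and \<alpha>: "0 < \<alpha>" "\<alpha> < 1/2" and t: "t > 0"
    and est: "\<forall>\<omega>. is_estimate \<beta>1 \<beta>2 sp n K (adj n \<omega>) (Zhat (adj n \<omega>))"
    and sep: "\<forall>z \<in> labelings n K. misclass n K z zs \<ge> \<delta> \<longrightarrow>
         frob2 {..<n} {..<n} P \<ge>
           (1 + \<alpha>) * (\<Sum>k<K. \<Sum>l<K. (opnorm (comm n z k) (comm n z l) P)\<^sup>2)
           + (3880 + 8 * \<beta>2) / \<alpha> * real (breve_card n K P z)
               * ln (real n * real K * exp 1 / real (breve_card n K P z))
           + (3880 + 8 * \<beta>2) / \<alpha> * (real (Jstar_card n K zs \<Lambda>) + real n * ln (real K) + t)
           + (2 * (\<beta>1 + \<beta>2)) * real (Jstar_card n K zs \<Lambda>)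
               * ln (real n * real K * exp 1 / real (Jstar_card n K zs \<Lambda>))"
  shows "measure_pmf.prob (edge_pmf n P) {\<omega>. misclass n K (Zhat (adj n \<omega>)) zs \<le> \<delta>} \<ge> 1 - 2 * exp (- t)"
proof -
  have sym: "\<forall>i<n. \<forall>j<n. P i j = P j i" using P by (simp add: mult.commute)
  have "0 \<le> P i j \<and> P i j \<le> 1" if "i < n" "j < n" for i j
    using P \<Lambda>01 labelings_range[OF zs] that by (simp add: mult_le_one)
  hence "measure_pmf.prob (edge_pmf n P) (good_event n K P t) \<ge> 1 - 2 * exp (- t)"
    using K t sym by (intro prob_good_event) auto
  moreover have "good_event n K P t \<subseteq> {\<omega>. misclass n K (Zhat (adj n \<omega>)) zs \<le> \<delta>}"
    using misclass_le_on_good_event[OF \<beta> K zs P A1 \<alpha> t sep] est by blast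
  hence "measure_pmf.prob (edge_pmf n P) (good_event n K P t)
      \<le> measure_pmf.prob (edge_pmf n P) {\<omega>. misclass n K (Zhat (adj n \<omega>)) zs \<le> \<delta>}"
    by (rule measure_pmf.finite_measure_mono) simp
  ultimately show ?thesis by linarith
qed

theorem theorem2:
  fixes \<beta>1 \<beta>2 :: real and sp :: bool
  assumes "\<beta>1 > 0" and "\<beta>2 > 0"
  shows "\<exists>H1>0. \<exists>H2>0. \<forall>(n::nat) (K::nat) (zs::nat \<Rightarrow> nat) (\<Lambda>::nat \<Rightarrow> nat \<Rightarrow> real)
      (P::nat \<Rightarrow> nat \<Rightarrow> real) (\<alpha>::real) (\<delta>::real) (t::real)
      (Zhat::(nat \<Rightarrow> nat \<Rightarrow> real) \<Rightarrow> nat \<Rightarrow> nat).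
    K \<ge> 2 \<and> zs \<in> labelings n K
    \<and> (\<forall>i<n. \<forall>l<K. 0 \<le> \<Lambda> i l \<and> \<Lambda> i l \<le> 1)
    \<and> (\<forall>i<n. \<forall>j<n. P i j = \<Lambda> i (zs j) * \<Lambda> j (zs i))
    \<and> (\<forall>k<K. \<forall>c::nat \<Rightarrow> real. (\<forall>i \<in> comm n zs k. (\<Sum>l<K. c l * \<Lambda> i l) = 0) \<longrightarrow> (\<forall>l<K. c l = 0))
    \<and> 0 < \<alpha> \<and> \<alpha> < 1/2 \<and> 0 < \<delta> \<and> \<delta> < 1 \<and> t > 0
    \<and> (\<forall>\<omega>. is_estimate \<beta>1 \<beta>2 sp n K (adj n \<omega>) (Zhat (adj n \<omega>)))
    \<and> (\<forall>z \<in> labelings n K. misclass n K z zs \<ge> \<delta> \<longrightarrow>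
         frob2 {..<n} {..<n} P \<ge>
           (1 + \<alpha>) * (\<Sum>k<K. \<Sum>l<K. (opnorm (comm n z k) (comm n z l) P)\<^sup>2)
           + H1 / \<alpha> * real (breve_card n K P z)
               * ln (real n * real K * exp 1 / real (breve_card n K P z))
           + H1 / \<alpha> * (real (Jstar_card n K zs \<Lambda>) + real n * ln (real K) + t)
           + H2 * real (Jstar_card n K zs \<Lambda>)
               * ln (real n * real K * exp 1 / real (Jstar_card n K zs \<Lambda>)))
    \<longrightarrow> measure_pmf.prob (edge_pmf n P) {\<omega>. misclass n K (Zhat (adj n \<omega>)) zs \<le> \<delta>}
          \<ge> 1 - 2 * exp (- t)"
  by (rule exI[of _ "3880 + 8 * \<beta>2"], rule conjI, use assms in simp,
      rule exI[of _ "2 * (\<beta>1 + \<beta>2)"], rule conjI, use assms in simp,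
      intro allI impI, elim conjE, rule misclass_le_with_high_probability[OF assms]; assumption)

end
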